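(* Let $\epsilon\ge0$, $\delta\in[0,1]$ and let $$C_{\epsilon,\delta}=\begin{bmatrix}\delta & \frac{(1-\delta)e^\epsilon}{1+e^\epsilon} & \frac{1-\delta}{1+e^\epsilon} & 0\\ 0 & \frac{1-\delta}{1+e^\epsilon} & \frac{(1-\delta)e^\epsilon}{1+e^\epsilon} & \delta\end{bmatrix}.$$ Then $\mathcal{C}(f_{\epsilon,\delta}) \equiv C_{\epsilon,\delta}$, where $f_{\epsilon,\delta}(\alpha)=\max\{0,\ 1-\delta-e^\epsilon\alpha,\ e^{-\epsilon}(1-\delta-\alpha)\}$, and for every $M\in\mathbb{C}_2$: $M$ satisfies $(\epsilon,\delta)$-DP if and only if $C_{\epsilon,\delta}\sqsubseteq M$.
   Context: Channels: fix two inputs $D_0, D_1$. A two-row channel $C$ with output set $\mathcal{Y}$ is a pair of probability distributions $C_{D_0}, C_{D_1}$ on $\mathcal{Y}$ (its rows); in the discrete case it is a $2\times|\mathcal{Y}|$ matrix with nonnegative entries whose rows sum to $1$; in general the rows may be probability measures on a common measurable output space. $\mathbb{C}_2$ is the set of all two-row channels. A channel $W$ is a row-stochastic matrix (Markov kernel), and $C\cdot W$ denotes composition. Refinement: $C \sqsubseteq C'$ iff there is a channel $W$ with $C\cdot W = C'$; $C\equiv C'$ iff both $C\sqsubseteq C'$ and $C'\sqsubseteq C$; $\min$ is greatest lower bound in $(\mathbb{C}_2,\sqsubseteq)$. For $f:[0,1]\to[0,1]$ convex with $f(\alpha)\le 1-\alpha$, and $\alpha\in[0,1]$, $f^\alpha$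 is the $2\times2$ channel with rows $(1-\alpha,\ \alpha)$ and $(f(\alpha),\ 1-f(\alpha))$, and $\mathcal{C}(f):=\min_{\alpha\in[0,1]}f^\alpha$. $M\in\mathbb{C}_2$ with output set $\mathcal{Y}$ satisfies $(\epsilon,\delta)$-DP iff for every (measurable) $S\subseteq\mathcal{Y}$: $M_{D_0}(S)\le e^\epsilon M_{D_1}(S)+\delta$ and $M_{D_1}(S)\le e^\epsilon M_{D_0}(S)+\delta$. *)

theory Defs
  imports "HOL-Probability.Probability"
begin

text \<open>A two-row channel: a pair of probability measures (rows for inputs D0, D1)
  on a common measurable output space.\<close>
type_synonym 'a channel = "'a measure \<times> 'a measure"

definition is_channel :: "'a channel \<Rightarrow> bool" where
  "is_channel C \<longleftrightarrow> prob_space (fst C) \<and> prob_space (snd C) \<and> sets (fst C) = sets (snd C)"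

text \<open>Refinement: C refines to C' iff some Markov kernel W (measurable map from the
  output space of C into probability measures on the output space of C') satisfies
  C \<cdot> W = C', i.e. each row of C' is the composition of the corresponding row of C with W.\<close>
definition refines :: "'a channel \<Rightarrow> 'b channel \<Rightarrow> bool" (infix "\<sqsubseteq>\<^sub>c" 50) where
  "C \<sqsubseteq>\<^sub>c C' \<longleftrightarrow>
     (\<exists>W. W \<in> measurable (fst C) (prob_algebra (fst C')) \<and>
          bind (fst C) W = fst C' \<and> bind (snd C) W = snd C')"

definition chan_equiv :: "'a channel \<Rightarrow> 'b channel \<Rightarrow> bool" where
  "chan_equiv C C' \<longleftrightarrow> C \<sqsubseteq>\<^sub>c C' \<and> C' \<sqsubseteq>\<^sub>c C"

text \<open>A finite row (y_0,...,y_{n-1}) as a measure on outputs nat (entries beyond n are 0).\<close>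
definition fin_row :: "real list \<Rightarrow> nat measure" where
  "fin_row xs = density (count_space UNIV) (\<lambda>i. ennreal (if i < length xs then xs ! i else 0))"

definition mat_channel :: "real list \<Rightarrow> real list \<Rightarrow> nat channel" where
  "mat_channel r0 r1 = (fin_row r0, fin_row r1)"

definition f_chan :: "(real \<Rightarrow> real) \<Rightarrow> real \<Rightarrow> nat channel" where
  "f_chan f \<alpha> = mat_channel [1 - \<alpha>, \<alpha>] [f \<alpha>, 1 - f \<alpha>]"

definition f_eps_delta :: "real \<Rightarrow> real \<Rightarrow> real \<Rightarrow> real" where
  "f_eps_delta \<epsilon> \<delta> \<alpha> = max 0 (max (1 - \<delta> - exp \<epsilon> * \<alpha>) (exp (- \<epsilon>) * (1 - \<delta> - \<alpha>)))"

definition C_eps_delta :: "real \<Rightarrow> real \<Rightarrow> nat channel" where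
  "C_eps_delta \<epsilon> \<delta> = mat_channel
     [\<delta>, (1 - \<delta>) * exp \<epsilon> / (1 + exp \<epsilon>), (1 - \<delta>) / (1 + exp \<epsilon>), 0]
     [0, (1 - \<delta>) / (1 + exp \<epsilon>), (1 - \<delta>) * exp \<epsilon> / (1 + exp \<epsilon>), \<delta>]"

definition DP :: "real \<Rightarrow> real \<Rightarrow> 'a channel \<Rightarrow> bool" where
  "DP \<epsilon> \<delta> M \<longleftrightarrow> (\<forall>S \<in> sets (fst M).
      measure (fst M) S \<le> exp \<epsilon> * measure (snd M) S + \<delta> \<and>
      measure (snd M) S \<le> exp \<epsilon> * measure (fst M) S + \<delta>)"

end

theory Submission
  imports Defs
begin

(* Write k = exp \<epsilon> and \<beta> = (1 - \<delta>) / (1 + k).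
   If M is (\<epsilon>, \<delta>)-DP, the densities p, q of its rows with respect to their mixture satisfy the
   hockey-stick bounds \<integral> (p - k q)\<^sup>+ \<le> \<delta> and \<integral> (q - k p)\<^sup>+ \<le> \<delta>. These allow a splitting
   p = u0 + k u1 + u2, q = u1 + k u2 + u3 into nonnegative parts of masses \<delta>, \<beta>, \<beta>, \<delta>, and the
   normalised parts form a kernel that turns C into M. Conversely, post-processing a finite channel
   cannot increase its hockey-stick sums, which for C equal \<delta>; so C \<sqsubseteq> M forces DP. Every f\<^sup>\<alpha> is
   DP, hence refined by C. Finally, if D refines every f\<^sup>\<alpha>, the refinements at \<alpha> = 1 - \<delta>, 0 and \<beta>
   yield tests (measurable maps into [0, 1]) that recombine into four tests summing to 1 whose
   expectations under the two rows of D are the rows of C; so D \<sqsubseteq> C. *)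

section \<open>Finite rows, kernels and tests\<close>

lemma sets_fin_row [simp]: "sets (fin_row xs) = UNIV"
  by (simp add: fin_row_def)

lemma space_fin_row [simp]: "space (fin_row xs) = UNIV"
  by (simp add: fin_row_def)

lemma nn_integral_fin_row:
  "(\<integral>\<^sup>+ i. g i \<partial>fin_row xs) = (\<Sum>i<length xs. ennreal (xs ! i) * g i)"
proof -
  have "(\<integral>\<^sup>+ i. g i \<partial>fin_row xs) =
      (\<integral>\<^sup>+ i. ennreal (if i < length xs then xs ! i else 0) * g i \<partial>count_space UNIV)"
    unfolding fin_row_def by (subst nn_integral_density) auto
  also have "\<dots> = (\<Sum>i\<in>{..<length xs}. ennreal (if i < length xs then xs ! i else 0) * g i)"
    by (rule nn_integral_count_space') auto
  finally show ?thesis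
    by simp
qed

lemma emeasure_fin_row:
  "emeasure (fin_row xs) A = (\<Sum>i<length xs. ennreal (xs ! i) * indicator A i)"
  using nn_integral_fin_row[where g="indicator A"] by simp

lemma prob_space_fin_row:
  assumes "\<And>i. i < length xs \<Longrightarrow> 0 \<le> xs ! i" and "sum_list xs = 1"
  shows "prob_space (fin_row xs)"
proof
  have "emeasure (fin_row xs) (space (fin_row xs)) = ennreal (\<Sum>i<length xs. xs ! i)"
    using assms(1) by (simp add: emeasure_fin_row) (subst sum_ennreal; auto)
  then show "emeasure (fin_row xs) (space (fin_row xs)) = 1"
    using assms(2) by (simp add: sum_list_sum_nth atLeast0LessThan)
qed

lemma measurable_fin_row_prob_algebra:
  assumes "\<And>i. prob_space (K i)" and "\<And>i. sets (K i) = sets N"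
  shows "K \<in> fin_row xs \<rightarrow>\<^sub>M prob_algebra N"
  using assms by (auto intro: measurableI simp: space_prob_algebra)

lemma sets_bind_fin_row:
  assumes "\<And>i. prob_space (K i)" and "\<And>i. sets (K i) = sets N"
  shows "sets (fin_row xs \<bind> K) = sets N"
  by (rule sets_bind) (auto simp: assms)

lemma emeasure_bind_fin_row:
  assumes K: "\<And>i. prob_space (K i)" "\<And>i. sets (K i) = sets N" and A: "A \<in> sets N"
  shows "emeasure (fin_row xs \<bind> K) A = (\<Sum>i<length xs. ennreal (xs ! i) * emeasure (K i) A)"
  by (subst emeasure_bind[where N=N])
     (auto simp: A nn_integral_fin_row intro!: measurable_prob_algebraD measurable_fin_row_prob_algebra K)

lemma measure_bind_fin_row:
  assumes K: "\<And>i. prob_space (K i)" "\<And>i. sets (K i) = sets N" and A: "A \<in> sets N"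
    and nonneg: "\<And>i. i < length xs \<Longrightarrow> 0 \<le> xs ! i"
  shows "measure (fin_row xs \<bind> K) A = (\<Sum>i<length xs. xs ! i * measure (K i) A)"
proof -
  have "emeasure (fin_row xs \<bind> K) A = ennreal (\<Sum>i<length xs. xs ! i * measure (K i) A)"
    unfolding emeasure_bind_fin_row[OF K A] using nonneg
    by (subst sum_ennreal[symmetric])
       (auto intro!: sum.cong simp: ennreal_mult finite_measure.emeasure_eq_measure[OF prob_space.finite_measure[OF K(1)]])
  moreover have "0 \<le> (\<Sum>i<length xs. xs ! i * measure (K i) A)"
    using nonneg by (intro sum_nonneg) auto
  ultimately show ?thesis
    by (simp add: measure_def)
qed

definition is_test :: "'a measure \<Rightarrow> ('a \<Rightarrow> real) \<Rightarrow> bool" where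
  "is_test M \<phi> \<longleftrightarrow> \<phi> \<in> borel_measurable M \<and> (\<forall>x. 0 \<le> \<phi> x \<and> \<phi> x \<le> 1)"

lemma is_test_cong_sets: "sets M = sets N \<Longrightarrow> is_test M \<phi> = is_test N \<phi>"
  unfolding is_test_def by (metis measurable_cong_sets)

lemma integrable_test: "prob_space M \<Longrightarrow> is_test M \<phi> \<Longrightarrow> integrable M \<phi>"
  unfolding is_test_def
  by (auto intro: finite_measure.integrable_const_bound[OF prob_space.finite_measure, where B=1])

lemma is_test_mult: "is_test M \<phi> \<Longrightarrow> is_test M \<psi> \<Longrightarrow> is_test M (\<lambda>x. \<phi> x * \<psi> x)"
  unfolding is_test_def by (auto intro: mult_le_one)

lemma is_test_complement: "is_test M \<phi> \<Longrightarrow> is_test M (\<lambda>x. 1 - \<phi> x)"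
  unfolding is_test_def by auto

lemma measurable_fin_row_of_tests:
  assumes tests: "\<And>w. w \<in> set ws \<Longrightarrow> is_test N w" and sum1: "\<And>x. (\<Sum>w\<leftarrow>ws. w x) = 1"
  shows "(\<lambda>x. fin_row (map (\<lambda>w. w x) ws)) \<in> N \<rightarrow>\<^sub>M prob_algebra (fin_row r)"
proof (rule measurable_prob_algebra_generated[where \<Omega>=UNIV and G=UNIV])
  show "sets (fin_row r) = sigma_sets UNIV UNIV"
    by (auto intro: sigma_sets.Basic)
  show "Int_stable UNIV" "UNIV \<subseteq> Pow UNIV"
    by (auto simp: Int_stable_def)
  fix x
  show "prob_space (fin_row (map (\<lambda>w. w x) ws))"
    using tests sum1[of x] by (intro prob_space_fin_row) (auto simp: is_test_def)
  show "sets (fin_row (map (\<lambda>w. w x) ws)) = sets (fin_row r)"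
    by simp
next
  fix A :: "nat set"
  have "(\<lambda>x. \<Sum>i<length ws. ennreal ((ws ! i) x) * indicator A i) \<in> borel_measurable N"
    using tests by (intro borel_measurable_sum borel_measurable_times_ennreal) (auto simp: is_test_def)
  then show "(\<lambda>x. emeasure (fin_row (map (\<lambda>w. w x) ws)) A) \<in> borel_measurable N"
    by (simp add: emeasure_fin_row)
qed

lemma bind_fin_row_of_tests:
  assumes N: "prob_space N"
    and tests: "\<And>w. w \<in> set ws \<Longrightarrow> is_test N w" and sum1: "\<And>x. (\<Sum>w\<leftarrow>ws. w x) = 1"
  shows "N \<bind> (\<lambda>x. fin_row (map (\<lambda>w. w x) ws)) = fin_row (map (integral\<^sup>L N) ws)"
proof (rule measure_eqI)
  interpret N: prob_space N by fact
  have kernel: "(\<lambda>x. fin_row (map (\<lambda>w. w x) ws)) \<in> N \<rightarrow>\<^sub>M prob_algebra (fin_row [])"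
    by (rule measurable_fin_row_of_tests[OF tests sum1])
  show "sets (N \<bind> (\<lambda>x. fin_row (map (\<lambda>w. w x) ws))) = sets (fin_row (map (integral\<^sup>L N) ws))"
    by (subst sets_bind[where N="fin_row []"]) (auto simp: N.not_empty)
  fix A
  have test_i: "is_test N (ws ! i)" if "i < length ws" for i
    using that tests by simp
  then have meas: "ws ! i \<in> borel_measurable N" if "i < length ws" for i
    using that by (simp add: is_test_def)
  have "emeasure (N \<bind> (\<lambda>x. fin_row (map (\<lambda>w. w x) ws))) A
      = (\<integral>\<^sup>+ x. (\<Sum>i<length ws. ennreal ((ws ! i) x) * indicator A i) \<partial>N)"
    by (subst emeasure_bind[where N="fin_row []"])
       (auto simp: N.not_empty emeasure_fin_row intro!: measurable_prob_algebraD kernel)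
  also have "\<dots> = (\<Sum>i<length ws. (\<integral>\<^sup>+ x. ennreal ((ws ! i) x) \<partial>N) * indicator A i)"
    using meas by (subst nn_integral_sum) (auto simp: nn_integral_multc)
  also have "\<dots> = (\<Sum>i<length ws. ennreal (integral\<^sup>L N (ws ! i)) * indicator A i)"
  proof (intro sum.cong refl)
    fix i assume "i \<in> {..<length ws}"
    then have test: "is_test N (ws ! i)"
      using test_i by simp
    then have "integrable N (ws ! i)"
      by (rule integrable_test[OF N])
    moreover have "AE x in N. 0 \<le> (ws ! i) x"
      using test by (simp add: is_test_def)
    ultimately show "(\<integral>\<^sup>+ x. ennreal ((ws ! i) x) \<partial>N) * indicator A i
        = ennreal (integral\<^sup>L N (ws ! i)) * indicator A i"
      by (simp add: nn_integral_eq_integral)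
  qed
  also have "\<dots> = emeasure (fin_row (map (integral\<^sup>L N) ws)) A"
    by (simp add: emeasure_fin_row)
  finally show "emeasure (N \<bind> (\<lambda>x. fin_row (map (\<lambda>w. w x) ws))) A
      = emeasure (fin_row (map (integral\<^sup>L N) ws)) A" .
qed

lemma refines_mat_channel_of_tests:
  assumes D: "is_channel D"
    and tests: "\<And>w. w \<in> set ws \<Longrightarrow> is_test (fst D) w" and sum1: "\<And>x. (\<Sum>w\<leftarrow>ws. w x) = 1"
  shows "D \<sqsubseteq>\<^sub>c mat_channel (map (integral\<^sup>L (fst D)) ws) (map (integral\<^sup>L (snd D)) ws)"
proof -
  have P: "prob_space (fst D)" and Q: "prob_space (snd D)" and PQ: "sets (snd D) = sets (fst D)"
    using D by (auto simp: is_channel_def)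
  have tests_Q: "is_test (snd D) w" if "w \<in> set ws" for w
    using tests[OF that] is_test_cong_sets[OF PQ] by simp
  show ?thesis
    unfolding refines_def mat_channel_def fst_conv snd_conv
    by (intro exI[of _ "\<lambda>x. fin_row (map (\<lambda>w. w x) ws)"] conjI measurable_fin_row_of_tests
        bind_fin_row_of_tests P Q tests tests_Q sum1)
qed

lemma test_of_refines_mat_channel:
  assumes D: "is_channel D" and refines: "D \<sqsubseteq>\<^sub>c mat_channel [x0, x1] [y0, y1]"
    and "0 \<le> x0" and "0 \<le> y0"
  obtains \<phi> where "is_test (fst D) \<phi>" "integral\<^sup>L (fst D) \<phi> = x0" "integral\<^sup>L (snd D) \<phi> = y0"
proof -
  have PQ: "sets (snd D) = sets (fst D)"
    using D by (auto simp: is_channel_def)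
  obtain W where W: "W \<in> fst D \<rightarrow>\<^sub>M prob_algebra (fin_row [x0, x1])"
    and bind_P: "fst D \<bind> W = fin_row [x0, x1]" and bind_Q: "snd D \<bind> W = fin_row [y0, y1]"
    using refines unfolding refines_def mat_channel_def fst_conv snd_conv by blast
  \<comment> \<open>\<open>W y\<close> is a probability measure only for \<open>y\<close> in the space, hence the cut-off at 1.\<close>
  define \<phi> where "\<phi> = (\<lambda>y. min 1 (measure (W y) {0}))"
  have test: "is_test (fst D) \<phi>"
    unfolding is_test_def \<phi>_def
    by (auto intro!: borel_measurable_min measurable_compose[OF W measurable_measure_prob_algebra])
  have "integral\<^sup>L N \<phi> = z"
    if N: "prob_space N" "sets N = sets (fst D)" and bind_N: "N \<bind> W = fin_row [z, z']"
      and "0 \<le> z" for N z z'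
  proof -
    interpret N: prob_space N by fact
    have W_N: "W \<in> N \<rightarrow>\<^sub>M prob_algebra (fin_row [x0, x1])"
      using W by (simp add: measurable_cong_sets[OF N(2) refl])
    have "emeasure (W y) {0} = ennreal (\<phi> y)" if "y \<in> space N" for y
    proof -
      interpret W: prob_space "W y"
        using measurable_space[OF W_N that] by (simp add: space_prob_algebra)
      show ?thesis
        by (simp add: \<phi>_def W.emeasure_eq_measure)
    qed
    then have "ennreal z = (\<integral>\<^sup>+ y. ennreal (\<phi> y) \<partial>N)"
      using emeasure_bind[where N="fin_row [x0, x1]" and X="{0}", OF N.not_empty
          measurable_prob_algebraD[OF W_N]] bind_N
      by (simp add: emeasure_fin_row cong: nn_integral_cong)
    also have "\<dots> = ennreal (integral\<^sup>L N \<phi>)"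
    proof -
      have "is_test N \<phi>"
        using test is_test_cong_sets[OF N(2)] by simp
      then have "integrable N \<phi>" and "AE y in N. 0 \<le> \<phi> y"
        by (auto intro: integrable_test[OF N(1)] simp: is_test_def)
      then show ?thesis
        by (rule nn_integral_eq_integral)
    qed
    finally show ?thesis
      using \<open>0 \<le> z\<close> test by (simp add: is_test_def integral_nonneg)
  qed
  moreover have "prob_space (fst D)" "prob_space (snd D)"
    using D by (auto simp: is_channel_def)
  ultimately show ?thesis
    using that test bind_P bind_Q PQ assms(3,4) by blast
qed

lemma refines_refl: "sets (snd C) = sets (fst C) \<Longrightarrow> C \<sqsubseteq>\<^sub>c C"
  unfolding refines_def
  by (intro exI[of _ "return (fst C)"]) (auto simp: bind_return'')

lemma sum_le_scaled_sum_plus_hockey_stick: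
  fixes a b c :: "'i \<Rightarrow> real"
  assumes "\<And>i. i \<in> I \<Longrightarrow> 0 \<le> c i \<and> c i \<le> 1"
  shows "(\<Sum>i\<in>I. a i * c i) \<le> k * (\<Sum>i\<in>I. b i * c i) + (\<Sum>i\<in>I. max 0 (a i - k * b i))"
proof -
  have "(a i - k * b i) * c i \<le> max 0 (a i - k * b i)" if "i \<in> I" for i
    using assms[OF that] by (cases "a i - k * b i \<ge> 0") (auto intro: mult_left_le mult_nonpos_nonneg)
  then have "(\<Sum>i\<in>I. (a i - k * b i) * c i) \<le> (\<Sum>i\<in>I. max 0 (a i - k * b i))"
    by (rule sum_mono)
  then show ?thesis
    by (simp add: sum_distrib_left left_diff_distrib sum_subtractf mult.assoc)
qed

lemma DP_of_refines_mat_channel: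
  assumes refines: "mat_channel xs ys \<sqsubseteq>\<^sub>c M" and len: "length ys = length xs"
    and nonneg: "\<And>i. i < length xs \<Longrightarrow> 0 \<le> xs ! i \<and> 0 \<le> ys ! i"
    and hs_xy: "(\<Sum>i<length xs. max 0 (xs ! i - exp \<epsilon> * ys ! i)) \<le> \<delta>"
    and hs_yx: "(\<Sum>i<length xs. max 0 (ys ! i - exp \<epsilon> * xs ! i)) \<le> \<delta>"
  shows "DP \<epsilon> \<delta> M"
  unfolding DP_def
proof
  fix S assume S: "S \<in> sets (fst M)"
  obtain W where W: "W \<in> fin_row xs \<rightarrow>\<^sub>M prob_algebra (fst M)"
    and bind_x: "fin_row xs \<bind> W = fst M" and bind_y: "fin_row ys \<bind> W = snd M"
    using refines unfolding refines_def mat_channel_def fst_conv snd_conv by blast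
  have K: "prob_space (W i)" "sets (W i) = sets (fst M)" for i
    using measurable_space[OF W, of i] by (auto simp: space_prob_algebra)
  define c where "c i = measure (W i) S" for i
  have c: "0 \<le> c i \<and> c i \<le> 1" for i
    using prob_space.prob_le_1[OF K(1)] by (simp add: c_def)
  have P: "measure (fst M) S = (\<Sum>i<length xs. xs ! i * c i)"
    unfolding bind_x[symmetric] c_def using nonneg by (intro measure_bind_fin_row[OF K S]) auto
  have Q: "measure (snd M) S = (\<Sum>i<length xs. ys ! i * c i)"
    unfolding bind_y[symmetric] c_def len[symmetric] using nonneg len
    by (intro measure_bind_fin_row[OF K S]) auto
  show "measure (fst M) S \<le> exp \<epsilon> * measure (snd M) S + \<delta> \<and>
      measure (snd M) S \<le> exp \<epsilon> * measure (fst M) S + \<delta>"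
    unfolding P Q using c hs_xy hs_yx
      sum_le_scaled_sum_plus_hockey_stick[of "{..<length xs}" c "(!) xs" "exp \<epsilon>" "(!) ys"]
      sum_le_scaled_sum_plus_hockey_stick[of "{..<length xs}" c "(!) ys" "exp \<epsilon>" "(!) xs"]
    by auto
qed

lemma DP_mat_channel:
  assumes "length ys = length xs"
    and "\<And>i. i < length xs \<Longrightarrow> 0 \<le> xs ! i \<and> 0 \<le> ys ! i"
    and "(\<Sum>i<length xs. max 0 (xs ! i - exp \<epsilon> * ys ! i)) \<le> \<delta>"
    and "(\<Sum>i<length xs. max 0 (ys ! i - exp \<epsilon> * xs ! i)) \<le> \<delta>"
  shows "DP \<epsilon> \<delta> (mat_channel xs ys)"
proof -
  have "mat_channel xs ys \<sqsubseteq>\<^sub>c mat_channel xs ys"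
    by (rule refines_refl) (simp add: mat_channel_def)
  then show ?thesis
    using assms by (rule DP_of_refines_mat_channel)
qed

section \<open>Densities\<close>

lemma real_density_of_absolutely_continuous:
  assumes \<mu>: "sigma_finite_measure \<mu>" and N: "sigma_finite_measure N" "sets N = sets \<mu>"
    and ac: "absolutely_continuous \<mu> N"
  obtains f where "f \<in> borel_measurable \<mu>" "\<And>x. 0 \<le> f x" "N = density \<mu> (\<lambda>x. ennreal (f x))"
proof -
  interpret \<mu>: sigma_finite_measure \<mu> by fact
  have "AE x in \<mu>. RN_deriv \<mu> N x \<noteq> \<infinity>"
    using N ac by (intro \<mu>.RN_deriv_finite) auto
  then have "density \<mu> (\<lambda>x. ennreal (enn2real (RN_deriv \<mu> N x))) = density \<mu> (RN_deriv \<mu> N)"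
    by (intro density_cong) (auto simp: ennreal_enn2real_if)
  also have "\<dots> = N"
    using N ac by (intro \<mu>.density_RN_deriv) auto
  finally show ?thesis
    by (intro that[of "\<lambda>x. enn2real (RN_deriv \<mu> N x)"]) auto
qed

lemma channel_densities:
  assumes "is_channel M"
  obtains \<mu> p q where "prob_space \<mu>" "sets \<mu> = sets (fst M)"
    "p \<in> borel_measurable \<mu>" "q \<in> borel_measurable \<mu>" "\<And>x. 0 \<le> p x" "\<And>x. 0 \<le> q x"
    "fst M = density \<mu> (\<lambda>x. ennreal (p x))" "snd M = density \<mu> (\<lambda>x. ennreal (q x))"
proof -
  define P where "P = fst M"
  define Q where "Q = snd M"
  have P: "prob_space P" and Q: "prob_space Q" and PQ: "sets Q = sets P"
    using assms by (auto simp: is_channel_def P_def Q_def)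
  define K where "K = (\<lambda>i::nat. if i = 0 then P else Q)"
  have K: "prob_space (K i)" "sets (K i) = sets P" for i
    using P Q PQ by (auto simp: K_def)
  \<comment> \<open>The mixture \<open>(P + Q) / 2\<close> dominates both rows.\<close>
  define \<mu> where "\<mu> = fin_row [1/2, 1/2] \<bind> K"
  have sets_\<mu>: "sets \<mu> = sets P"
    unfolding \<mu>_def by (rule sets_bind_fin_row[OF K])
  have emeasure_\<mu>: "emeasure \<mu> A = ennreal (1/2) * emeasure P A + ennreal (1/2) * emeasure Q A"
    if "A \<in> sets P" for A
    unfolding \<mu>_def emeasure_bind_fin_row[OF K that] by (simp add: K_def numeral_eq_Suc)
  have space_\<mu>: "space \<mu> = space P" "space Q = space P"
    using sets_eq_imp_space_eq[OF sets_\<mu>] sets_eq_imp_space_eq[OF PQ] by auto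
  interpret \<mu>: prob_space \<mu>
  proof
    have "emeasure \<mu> (space \<mu>) = ennreal (1/2) * 1 + ennreal (1/2) * 1"
      using emeasure_\<mu>[of "space P"] prob_space.emeasure_space_1[OF P] prob_space.emeasure_space_1[OF Q]
      by (simp add: space_\<mu>)
    also have "\<dots> = ennreal (1/2 + 1/2)"
      by (simp only: mult_1_right) (rule ennreal_plus[symmetric]; simp)
    finally show "emeasure \<mu> (space \<mu>) = 1"
      by simp
  qed
  have "A \<in> null_sets P \<and> A \<in> null_sets Q" if "A \<in> null_sets \<mu>" for A
  proof -
    have A: "A \<in> sets P" "emeasure \<mu> A = 0"
      using that sets_\<mu> by (auto dest: null_setsD1 null_setsD2)
    then have "emeasure P A = 0" "emeasure Q A = 0"
      using emeasure_\<mu>[OF A(1)] by (auto simp del: ennreal_half)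
    then show ?thesis
      using A PQ by (auto intro: null_setsI)
  qed
  then have "absolutely_continuous \<mu> P" "absolutely_continuous \<mu> Q"
    unfolding absolutely_continuous_def by auto
  then obtain p q where "p \<in> borel_measurable \<mu>" "\<And>x. 0 \<le> p x" "P = density \<mu> (\<lambda>x. ennreal (p x))"
    and "q \<in> borel_measurable \<mu>" "\<And>x. 0 \<le> q x" "Q = density \<mu> (\<lambda>x. ennreal (q x))"
    using real_density_of_absolutely_continuous[of \<mu> P] real_density_of_absolutely_continuous[of \<mu> Q]
      P Q PQ sets_\<mu> \<mu>.sigma_finite_measure_axioms by (metis prob_space_imp_sigma_finite)
  moreover have "sets \<mu> = sets (fst M)"
    using sets_\<mu> by (simp add: P_def)
  ultimately show ?thesis
    using that[of \<mu> p q] \<mu>.prob_space_axioms unfolding P_def Q_def by blast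
qed

lemma measure_density_real:
  fixes p :: "'a \<Rightarrow> real"
  assumes [measurable]: "p \<in> borel_measurable \<mu>" and nonneg: "\<And>x. 0 \<le> p x"
    and int: "integrable \<mu> p" and A [measurable]: "A \<in> sets \<mu>"
  shows "measure (density \<mu> (\<lambda>x. ennreal (p x))) A = (\<integral>x. indicator A x * p x \<partial>\<mu>)"
proof -
  have "emeasure (density \<mu> (\<lambda>x. ennreal (p x))) A = (\<integral>\<^sup>+x. ennreal (indicator A x * p x) \<partial>\<mu>)"
    by (subst emeasure_density) (auto intro!: nn_integral_cong simp: indicator_def)
  also have "\<dots> = ennreal (\<integral>x. indicator A x * p x \<partial>\<mu>)"
    using integrable_real_mult_indicator[OF A int] nonneg
    by (intro nn_integral_eq_integral) (auto simp: mult.commute)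
  finally show ?thesis
    using nonneg by (simp add: measure_def integral_nonneg)
qed

lemma prob_space_density_imp_integral:
  fixes p :: "'a \<Rightarrow> real"
  assumes p: "p \<in> borel_measurable \<mu>" and nonneg: "\<And>x. 0 \<le> p x"
    and prob: "prob_space (density \<mu> (\<lambda>x. ennreal (p x)))"
  shows "integrable \<mu> p" and "integral\<^sup>L \<mu> p = 1"
proof -
  have nn_1: "(\<integral>\<^sup>+x. ennreal (p x) \<partial>\<mu>) = ennreal 1"
    using prob_space.emeasure_space_1[OF prob] p
    by (simp add: emeasure_density cong: nn_integral_cong)
  show int: "integrable \<mu> p"
    using p nonneg nn_1 by (intro integrableI_nn_integral_finite) auto
  have "ennreal (integral\<^sup>L \<mu> p) = ennreal 1"
    using nn_integral_eq_integral[OF int] nonneg nn_1 by simp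
  then show "integral\<^sup>L \<mu> p = 1"
    using nonneg by (simp add: integral_nonneg)
qed

lemma emeasure_density_sum:
  fixes u :: "'i \<Rightarrow> 'a \<Rightarrow> real"
  assumes "finite I" and [measurable]: "\<And>i. i \<in> I \<Longrightarrow> u i \<in> borel_measurable \<mu>"
    and A [measurable]: "A \<in> sets \<mu>"
    and nonneg: "\<And>i x. i \<in> I \<Longrightarrow> 0 \<le> u i x" "\<And>i. i \<in> I \<Longrightarrow> 0 \<le> c i"
  shows "emeasure (density \<mu> (\<lambda>x. ennreal (\<Sum>i\<in>I. c i * u i x))) A
       = (\<Sum>i\<in>I. ennreal (c i) * emeasure (density \<mu> (\<lambda>x. ennreal (u i x))) A)"
proof -
  have "emeasure (density \<mu> (\<lambda>x. ennreal (\<Sum>i\<in>I. c i * u i x))) A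
      = (\<integral>\<^sup>+x. (\<Sum>i\<in>I. ennreal (c i) * (ennreal (u i x) * indicator A x)) \<partial>\<mu>)"
    using nonneg
    by (subst emeasure_density)
       (auto intro!: nn_integral_cong borel_measurable_sum simp: sum_ennreal[symmetric]
          sum_distrib_right ennreal_mult mult.assoc)
  also have "\<dots> = (\<Sum>i\<in>I. ennreal (c i) * emeasure (density \<mu> (\<lambda>x. ennreal (u i x))) A)"
    using \<open>finite I\<close> by (simp add: nn_integral_sum nn_integral_cmult emeasure_density)
  finally show ?thesis .
qed

text \<open>The fallback \<open>P\<close> matters only when \<open>u\<close> has mass zero; any probability measure on the
  space will do.\<close>
definition normalized_density :: "'a measure \<Rightarrow> 'a measure \<Rightarrow> ('a \<Rightarrow> real) \<Rightarrow> 'a measure" where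
  "normalized_density P \<mu> u =
     (if integral\<^sup>L \<mu> u = 0 then P else density \<mu> (\<lambda>x. ennreal (u x / integral\<^sup>L \<mu> u)))"

lemma sets_normalized_density: "sets P = sets \<mu> \<Longrightarrow> sets (normalized_density P \<mu> u) = sets \<mu>"
  by (simp add: normalized_density_def)

lemma emeasure_space_density_real:
  fixes u :: "'a \<Rightarrow> real"
  assumes "u \<in> borel_measurable \<mu>" "\<And>x. 0 \<le> u x" "integrable \<mu> u"
  shows "emeasure (density \<mu> (\<lambda>x. ennreal (u x))) (space \<mu>) = ennreal (integral\<^sup>L \<mu> u)"
  using assms nn_integral_eq_integral[of \<mu> u] by (simp add: emeasure_density cong: nn_integral_cong)

lemma emeasure_normalized_density:
  fixes u :: "'a \<Rightarrow> real"
  assumes [measurable]: "u \<in> borel_measurable \<mu>" and nonneg: "\<And>x. 0 \<le> u x" and int: "integrable \<mu> u"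
    and A: "A \<in> sets \<mu>"
  shows "ennreal (integral\<^sup>L \<mu> u) * emeasure (normalized_density P \<mu> u) A
       = emeasure (density \<mu> (\<lambda>x. ennreal (u x))) A"
proof (cases "integral\<^sup>L \<mu> u = 0")
  case True
  have "emeasure (density \<mu> (\<lambda>x. ennreal (u x))) A \<le> emeasure (density \<mu> (\<lambda>x. ennreal (u x))) (space \<mu>)"
    using A by (intro emeasure_mono) (auto dest: sets.sets_into_space)
  then show ?thesis
    using True emeasure_space_density_real[OF assms(1-3)] by simp
next
  case False
  then have "0 < integral\<^sup>L \<mu> u"
    using nonneg by (simp add: integral_nonneg order_le_neq_trans)
  then show ?thesis
    using emeasure_density_sum[of "{()}" "\<lambda>_. u" \<mu> A "\<lambda>_. 1 / integral\<^sup>L \<mu> u"] A nonneg False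
    by (simp add: normalized_density_def mult.assoc[symmetric] flip: ennreal_mult)
qed

lemma prob_space_normalized_density:
  fixes u :: "'a \<Rightarrow> real"
  assumes P: "prob_space P"
    and u: "u \<in> borel_measurable \<mu>" "\<And>x. 0 \<le> u x" "integrable \<mu> u"
  shows "prob_space (normalized_density P \<mu> u)"
proof (cases "integral\<^sup>L \<mu> u = 0")
  case False
  define m where "m = integral\<^sup>L \<mu> u"
  have "0 < m"
    using False u(2) by (simp add: m_def integral_nonneg order_le_neq_trans)
  have "emeasure (normalized_density P \<mu> u) (space \<mu>)
      = ennreal (1 / m) * (ennreal m * emeasure (normalized_density P \<mu> u) (space \<mu>))"
    using \<open>0 < m\<close> by (simp add: mult.assoc[symmetric] flip: ennreal_mult)
  also have "\<dots> = ennreal (1 / m) * ennreal m"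
    using emeasure_normalized_density[OF u] emeasure_space_density_real[OF u] by (simp add: m_def)
  also have "\<dots> = 1"
    using \<open>0 < m\<close> by (simp flip: ennreal_mult)
  finally have "emeasure (normalized_density P \<mu> u) (space \<mu>) = 1" .
  then show ?thesis
    using False by (intro prob_spaceI) (simp add: normalized_density_def)
qed (simp add: normalized_density_def P)

lemma bind_fin_row_normalized_density:
  fixes u :: "nat \<Rightarrow> 'a \<Rightarrow> real"
  assumes P: "prob_space P" "sets P = sets \<mu>"
    and u: "\<And>i. u i \<in> borel_measurable \<mu>" "\<And>i x. 0 \<le> u i x" "\<And>i. integrable \<mu> (u i)"
    and c: "\<And>i. i < length xs \<Longrightarrow> 0 \<le> c i" and xs: "\<And>i. i < length xs \<Longrightarrow> xs ! i = c i * integral\<^sup>L \<mu> (u i)"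
  shows "fin_row xs \<bind> (\<lambda>i. normalized_density P \<mu> (u i))
       = density \<mu> (\<lambda>x. ennreal (\<Sum>i<length xs. c i * u i x))"
proof (rule measure_eqI)
  have K: "prob_space (normalized_density P \<mu> (u i))" "sets (normalized_density P \<mu> (u i)) = sets \<mu>" for i
    using prob_space_normalized_density[OF P(1) u(1-3)] sets_normalized_density[OF P(2)] by auto
  show "sets (fin_row xs \<bind> (\<lambda>i. normalized_density P \<mu> (u i)))
      = sets (density \<mu> (\<lambda>x. ennreal (\<Sum>i<length xs. c i * u i x)))"
    by (simp add: sets_bind_fin_row[OF K(1,2)])
  fix A assume "A \<in> sets (fin_row xs \<bind> (\<lambda>i. normalized_density P \<mu> (u i)))"
  then have A: "A \<in> sets \<mu>"
    by (simp add: sets_bind_fin_row[OF K(1,2)])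
  have "emeasure (fin_row xs \<bind> (\<lambda>i. normalized_density P \<mu> (u i))) A
      = (\<Sum>i<length xs. ennreal (c i) * (ennreal (integral\<^sup>L \<mu> (u i)) * emeasure (normalized_density P \<mu> (u i)) A))"
    using c u(2)
    by (auto simp: emeasure_bind_fin_row[OF K(1,2) A] xs ennreal_mult integral_nonneg mult.assoc
        intro!: sum.cong)
  also have "\<dots> = emeasure (density \<mu> (\<lambda>x. ennreal (\<Sum>i<length xs. c i * u i x))) A"
    using A u c by (subst emeasure_density_sum) (auto simp: emeasure_normalized_density)
  finally show "emeasure (fin_row xs \<bind> (\<lambda>i. normalized_density P \<mu> (u i))) A
      = emeasure (density \<mu> (\<lambda>x. ennreal (\<Sum>i<length xs. c i * u i x))) A" .
qed

section \<open>Hockey-stick divergence\<close>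

definition hockey_stick :: "'a measure \<Rightarrow> real \<Rightarrow> ('a \<Rightarrow> real) \<Rightarrow> ('a \<Rightarrow> real) \<Rightarrow> real" where
  "hockey_stick \<mu> k p q = (\<integral>x. max 0 (p x - k * q x) \<partial>\<mu>)"

lemma integrable_max_0_diff:
  "integrable \<mu> p \<Longrightarrow> integrable \<mu> q \<Longrightarrow> integrable \<mu> (\<lambda>x. max 0 (p x - k * q x :: real))"
  by (auto intro!: integrable_max integrable_diff integrable_mult_right)

lemma hockey_stick_le_of_measure_le:
  fixes p q :: "'a \<Rightarrow> real"
  assumes [measurable]: "p \<in> borel_measurable \<mu>" "q \<in> borel_measurable \<mu>"
    and nonneg: "\<And>x. 0 \<le> p x" "\<And>x. 0 \<le> q x" and int: "integrable \<mu> p" "integrable \<mu> q"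
    and le: "\<And>S. S \<in> sets \<mu> \<Longrightarrow> measure (density \<mu> (\<lambda>x. ennreal (p x))) S
                \<le> k * measure (density \<mu> (\<lambda>x. ennreal (q x))) S + \<delta>"
  shows "hockey_stick \<mu> k p q \<le> \<delta>"
proof -
  define S where "S = {x \<in> space \<mu>. k * q x < p x}"
  have S [measurable]: "S \<in> sets \<mu>"
    unfolding S_def by measurable
  have int_S: "integrable \<mu> (\<lambda>x. indicator S x * p x)" "integrable \<mu> (\<lambda>x. indicator S x * q x)"
    using integrable_real_mult_indicator[OF S int(1)] integrable_real_mult_indicator[OF S int(2)]
    by (simp_all add: mult.commute)
  have "hockey_stick \<mu> k p q = (\<integral>x. indicator S x * p x - k * (indicator S x * q x) \<partial>\<mu>)"
    unfolding hockey_stick_def by (rule Bochner_Integration.integral_cong) (auto simp: S_def indicator_def)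
  also have "\<dots> = measure (density \<mu> (\<lambda>x. ennreal (p x))) S - k * measure (density \<mu> (\<lambda>x. ennreal (q x))) S"
    using int_S by (simp add: measure_density_real nonneg int)
  finally show ?thesis
    using le[OF S] by simp
qed

lemma hockey_stick_lipschitz:
  fixes p q :: "'a \<Rightarrow> real"
  assumes int: "integrable \<mu> p" "integrable \<mu> q" and nonneg: "\<And>x. 0 \<le> p x"
  shows "\<bar>hockey_stick \<mu> g q p - hockey_stick \<mu> h q p\<bar> \<le> \<bar>g - h\<bar> * integral\<^sup>L \<mu> p"
proof -
  have "\<bar>hockey_stick \<mu> g q p - hockey_stick \<mu> h q p\<bar>
      = \<bar>\<integral>x. max 0 (q x - g * p x) - max 0 (q x - h * p x) \<partial>\<mu>\<bar>"
    unfolding hockey_stick_def using integrable_max_0_diff[OF int(2,1)] by simp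
  also have "\<dots> \<le> (\<integral>x. \<bar>max 0 (q x - g * p x) - max 0 (q x - h * p x)\<bar> \<partial>\<mu>)"
    using integral_abs_bound by blast
  also have "\<dots> \<le> (\<integral>x. \<bar>g - h\<bar> * p x \<partial>\<mu>)"
  proof (rule integral_mono)
    fix x
    have "\<bar>max 0 (q x - g * p x) - max 0 (q x - h * p x)\<bar> \<le> \<bar>(h - g) * p x\<bar>"
      by (simp add: left_diff_distrib)
    then show "\<bar>max 0 (q x - g * p x) - max 0 (q x - h * p x)\<bar> \<le> \<bar>g - h\<bar> * p x"
      using nonneg[of x] by (simp add: abs_mult abs_minus_commute)
  qed (use integrable_max_0_diff[OF int(2,1)] int in auto)
  finally show ?thesis
    by simp
qed

lemma integral_min_eq_hockey_stick:
  fixes p q :: "'a \<Rightarrow> real"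
  assumes "integrable \<mu> p" "integrable \<mu> q"
  shows "(\<integral>x. min (p x) (k * q x) \<partial>\<mu>) = integral\<^sup>L \<mu> p - hockey_stick \<mu> k p q"
proof -
  have "(\<integral>x. min (p x) (k * q x) \<partial>\<mu>) = (\<integral>x. p x - max 0 (p x - k * q x) \<partial>\<mu>)"
    by (intro Bochner_Integration.integral_cong) auto
  then show ?thesis
    unfolding hockey_stick_def using assms integrable_max_0_diff[OF assms] by simp
qed

lemma hockey_stick_reciprocal:
  fixes p q :: "'a \<Rightarrow> real"
  assumes "0 < k" and int: "integrable \<mu> p" "integrable \<mu> q"
  shows "k * hockey_stick \<mu> (1 / k) q p = k * integral\<^sup>L \<mu> q - integral\<^sup>L \<mu> p + hockey_stick \<mu> k p q"
proof -
  have pointwise: "k * max 0 (q x - 1 / k * p x) = (k * q x - p x) + max 0 (p x - k * q x)" for x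
    using \<open>0 < k\<close> by (simp add: max_def field_simps)
  have "k * hockey_stick \<mu> (1 / k) q p = (\<integral>x. k * max 0 (q x - 1 / k * p x) \<partial>\<mu>)"
    by (simp add: hockey_stick_def)
  also have "\<dots> = (\<integral>x. (k * q x - p x) + max 0 (p x - k * q x) \<partial>\<mu>)"
    by (intro Bochner_Integration.integral_cong refl pointwise)
  finally show ?thesis
    unfolding hockey_stick_def using int integrable_max_0_diff[OF int] by simp
qed

lemma hockey_stick_balancing_ratio:
  fixes p q :: "'a \<Rightarrow> real"
  assumes int: "integrable \<mu> p" "integrable \<mu> q" and nonneg: "\<And>x. 0 \<le> p x" "\<And>x. 0 \<le> q x"
    and total: "integral\<^sup>L \<mu> p = 1" "integral\<^sup>L \<mu> q = 1" and "1 \<le> k"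
    and le: "hockey_stick \<mu> k q p \<le> hockey_stick \<mu> k p q"
  obtains g where "1 / k \<le> g" "g \<le> k" "hockey_stick \<mu> g q p = hockey_stick \<mu> k p q"
proof -
  define a where "a = hockey_stick \<mu> k p q"
  have "0 \<le> (\<integral>x. min (p x) (k * q x) \<partial>\<mu>)"
    using nonneg \<open>1 \<le> k\<close> by (intro Bochner_Integration.integral_nonneg) auto
  then have "a \<le> 1"
    using integral_min_eq_hockey_stick[OF int, of k] total by (simp add: a_def)
  then have "0 \<le> (k - 1) * (1 - a)"
    using \<open>1 \<le> k\<close> by simp
  moreover have "k * hockey_stick \<mu> (1 / k) q p = k - 1 + a"
    using hockey_stick_reciprocal[OF _ int, of k] \<open>1 \<le> k\<close> total by (simp add: a_def)
  ultimately have "k * a \<le> k * hockey_stick \<mu> (1 / k) q p"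
    by (simp add: algebra_simps)
  then have "a \<le> hockey_stick \<mu> (1 / k) q p"
    using \<open>1 \<le> k\<close> by simp
  moreover have "continuous_on {1 / k..k} (\<lambda>g. hockey_stick \<mu> g q p)"
    using hockey_stick_lipschitz[OF int nonneg(1)] total
    by (intro lipschitz_on_continuous_on[where L=1] lipschitz_onI) (auto simp: dist_real_def)
  moreover have "1 / k \<le> k"
    using \<open>1 \<le> k\<close> by (smt (verit) divide_le_eq_1)
  ultimately obtain g where "1 / k \<le> g" "g \<le> k" "hockey_stick \<mu> g q p = a"
    using IVT2'[of "\<lambda>g. hockey_stick \<mu> g q p" k a "1 / k"] le by (auto simp: a_def)
  then show ?thesis
    using that by (simp add: a_def)
qed

lemma delta_part_bounds:
  fixes p q k g t :: real
  assumes "0 \<le> p" "0 \<le> q" "1 \<le> k" "1 / k \<le> g" "g \<le> k" "0 \<le> t" "t \<le> 1"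
  defines "u0 \<equiv> max 0 (p - k * q) + t * min p (k * q)"
    and "u3 \<equiv> max 0 (q - g * p) + t * min q (g * p)"
  shows "0 \<le> u0 \<and> u0 \<le> p \<and> 0 \<le> u3 \<and> u3 \<le> q \<and> p - u0 \<le> k * (q - u3) \<and> q - u3 \<le> k * (p - u0)"
proof -
  have "0 < g"
    using assms(3,4) by (smt (verit) divide_pos_pos)
  have "1 \<le> k * g" "1 \<le> k * k"
    using assms(3-5) by (auto simp: field_simps) (smt (verit) mult_mono)
  then have "p \<le> k * (g * p)" "q \<le> k * (k * q)"
    using assms(1,2) mult_right_mono[of 1 "k * g" p] mult_right_mono[of 1 "k * k" q]
    by (simp_all add: mult.assoc)
  moreover have "g * p \<le> k * p"
    using assms(1,5) by (simp add: mult_right_mono)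
  ultimately have ratio: "min p (k * q) \<le> k * min q (g * p)" "min q (g * p) \<le> k * min p (k * q)"
    by (auto simp: min_def)
  have residual: "p - u0 = (1 - t) * min p (k * q)" "q - u3 = (1 - t) * min q (g * p)"
    unfolding u0_def u3_def by (auto simp: max_def min_def algebra_simps)
  have min_nonneg: "0 \<le> min p (k * q)" "0 \<le> min q (g * p)"
    using assms(1-3) \<open>0 < g\<close> by auto
  have "(1 - t) * min p (k * q) \<le> k * ((1 - t) * min q (g * p))"
    "(1 - t) * min q (g * p) \<le> k * ((1 - t) * min p (k * q))"
    using mult_left_mono[OF ratio(1), of "1 - t"] mult_left_mono[OF ratio(2), of "1 - t"] assms(7)
    by (simp_all add: mult.left_commute)
  moreover have "0 \<le> (1 - t) * min p (k * q)" "0 \<le> (1 - t) * min q (g * p)"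
    using min_nonneg assms(7) by simp_all
  moreover have "0 \<le> u0" "0 \<le> u3"
    unfolding u0_def u3_def using min_nonneg assms(6) by simp_all
  ultimately show ?thesis
    unfolding residual[symmetric] by linarith
qed

lemma exists_delta_parts_ordered:
  fixes p q :: "'a \<Rightarrow> real"
  assumes int: "integrable \<mu> p" "integrable \<mu> q" and nonneg: "\<And>x. 0 \<le> p x" "\<And>x. 0 \<le> q x"
    and total: "integral\<^sup>L \<mu> p = 1" "integral\<^sup>L \<mu> q = 1"
    and "1 \<le> k" and "\<delta> \<le> 1" and hs_pq: "hockey_stick \<mu> k p q \<le> \<delta>"
    and hs_qp: "hockey_stick \<mu> k q p \<le> hockey_stick \<mu> k p q"
  obtains u0 u3 where "integrable \<mu> u0" "integrable \<mu> u3"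
    "\<And>x. 0 \<le> u0 x \<and> u0 x \<le> p x \<and> 0 \<le> u3 x \<and> u3 x \<le> q x \<and>
          p x - u0 x \<le> k * (q x - u3 x) \<and> q x - u3 x \<le> k * (p x - u0 x)"
    "integral\<^sup>L \<mu> u0 = \<delta>" "integral\<^sup>L \<mu> u3 = \<delta>"
proof -
  define a where "a = hockey_stick \<mu> k p q"
  obtain g where g: "1 / k \<le> g" "g \<le> k" "hockey_stick \<mu> g q p = a"
    using hockey_stick_balancing_ratio[OF int nonneg total \<open>1 \<le> k\<close> hs_qp] by (auto simp: a_def)
  \<comment> \<open>The same fraction \<open>t\<close> of the overlaps \<open>min p (k q)\<close> and \<open>min q (g p)\<close>, both of mass \<open>1 - a\<close>,
    tops up the excess parts of mass \<open>a\<close> to mass \<open>\<delta>\<close>.\<close>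
  define t where "t = (\<delta> - a) / (1 - a)"
  have "a \<le> \<delta>"
    using hs_pq by (simp add: a_def)
  have t: "0 \<le> t \<and> t \<le> 1 \<and> a + t * (1 - a) = \<delta>"
  proof (cases "a = 1")
    case False
    then have "0 < 1 - a"
      using \<open>a \<le> \<delta>\<close> \<open>\<delta> \<le> 1\<close> by simp
    then show ?thesis
      using \<open>a \<le> \<delta>\<close> \<open>\<delta> \<le> 1\<close> by (simp add: t_def field_simps)
  qed (use \<open>a \<le> \<delta>\<close> \<open>\<delta> \<le> 1\<close> in \<open>simp add: t_def\<close>)
  define u0 where "u0 x = max 0 (p x - k * q x) + t * min (p x) (k * q x)" for x
  define u3 where "u3 x = max 0 (q x - g * p x) + t * min (q x) (g * p x)" for x
  have int_u: "integrable \<mu> u0" "integrable \<mu> u3"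
    unfolding u0_def u3_def using int integrable_max_0_diff[OF int] integrable_max_0_diff[OF int(2,1)]
    by auto
  have "integral\<^sup>L \<mu> u0 = a + t * (1 - a)"
    unfolding u0_def using int integrable_max_0_diff[OF int] integral_min_eq_hockey_stick[OF int]
    by (simp add: hockey_stick_def a_def total)
  moreover have "integral\<^sup>L \<mu> u3 = a + t * (1 - a)"
    unfolding u3_def using int integrable_max_0_diff[OF int(2,1)] integral_min_eq_hockey_stick[OF int(2,1)]
    by (simp add: hockey_stick_def g(3)[symmetric] total)
  moreover have "0 \<le> u0 x \<and> u0 x \<le> p x \<and> 0 \<le> u3 x \<and> u3 x \<le> q x \<and>
          p x - u0 x \<le> k * (q x - u3 x) \<and> q x - u3 x \<le> k * (p x - u0 x)" for x
    unfolding u0_def u3_def using delta_part_bounds[OF nonneg(1,2) \<open>1 \<le> k\<close> g(1,2)] t by blast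
  ultimately show ?thesis
    using that int_u t by metis
qed

lemma exists_delta_parts:
  fixes p q :: "'a \<Rightarrow> real"
  assumes int: "integrable \<mu> p" "integrable \<mu> q" and nonneg: "\<And>x. 0 \<le> p x" "\<And>x. 0 \<le> q x"
    and total: "integral\<^sup>L \<mu> p = 1" "integral\<^sup>L \<mu> q = 1"
    and "1 \<le> k" and "\<delta> \<le> 1" and hs: "hockey_stick \<mu> k p q \<le> \<delta>" "hockey_stick \<mu> k q p \<le> \<delta>"
  obtains u0 u3 where "integrable \<mu> u0" "integrable \<mu> u3"
    "\<And>x. 0 \<le> u0 x \<and> u0 x \<le> p x \<and> 0 \<le> u3 x \<and> u3 x \<le> q x \<and>
          p x - u0 x \<le> k * (q x - u3 x) \<and> q x - u3 x \<le> k * (p x - u0 x)"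
    "integral\<^sup>L \<mu> u0 = \<delta>" "integral\<^sup>L \<mu> u3 = \<delta>"
proof (cases "hockey_stick \<mu> k q p \<le> hockey_stick \<mu> k p q")
  case True
  then show ?thesis
    using exists_delta_parts_ordered[OF assms(1-9)] that by blast
next
  case False
  then have "hockey_stick \<mu> k p q \<le> hockey_stick \<mu> k q p"
    by simp
  from exists_delta_parts_ordered[OF int(2,1) nonneg(2,1) total(2,1) \<open>1 \<le> k\<close> \<open>\<delta> \<le> 1\<close> hs(2) this]
  show ?thesis
    using that by (metis (no_types, lifting))
qed

text \<open>\<open>ratio_split k a b\<close> and \<open>ratio_split k b a\<close> are the solution \<open>(u, v)\<close> of
  \<open>a = k u + v\<close>, \<open>b = u + k v\<close>; for \<open>k = 1\<close> the system is singular and, as \<open>a = b\<close> in the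
  intended use, the symmetric solution is taken.\<close>
definition ratio_split :: "real \<Rightarrow> real \<Rightarrow> real \<Rightarrow> real" where
  "ratio_split k a b = (if k = 1 then a / 2 else (k * a - b) / (k\<^sup>2 - 1))"

lemma ratio_split_nonneg:
  assumes "1 \<le> k" "0 \<le> a" "b \<le> k * a"
  shows "0 \<le> ratio_split k a b"
proof (cases "k = 1")
  case False
  then have "1 < k\<^sup>2"
    using assms(1) by (simp add: one_less_power)
  then show ?thesis
    using False assms(3) by (simp add: ratio_split_def)
qed (use assms in \<open>simp add: ratio_split_def\<close>)

lemma ratio_split_solves:
  assumes "1 \<le> k" "a \<le> k * b" "b \<le> k * a"
  shows "k * ratio_split k a b + ratio_split k b a = a"
proof (cases "k = 1")
  case False
  then have "1 < k\<^sup>2"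
    using assms(1) by (simp add: one_less_power)
  then have "k\<^sup>2 - 1 \<noteq> 0"
    by simp
  then show ?thesis
    using False by (simp add: ratio_split_def divide_simps) (simp add: algebra_simps power2_eq_square)
qed (use assms in \<open>simp add: ratio_split_def\<close>)

lemma ratio_split_diagonal:
  assumes "1 \<le> k"
  shows "ratio_split k c c = c / (1 + k)"
proof (cases "k = 1")
  case False
  then have "1 < k\<^sup>2" "1 + k \<noteq> 0"
    using assms by (simp_all add: one_less_power)
  then show ?thesis
    using False by (simp add: ratio_split_def field_simps power2_eq_square)
qed (simp add: ratio_split_def)

lemma integrable_ratio_split:
  "integrable \<mu> f \<Longrightarrow> integrable \<mu> g \<Longrightarrow> integrable \<mu> (\<lambda>x. ratio_split k (f x) (g x))"
  by (cases "k = 1") (simp_all add: ratio_split_def)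

lemma integral_ratio_split:
  assumes "integrable \<mu> f" "integrable \<mu> g"
  shows "(\<integral>x. ratio_split k (f x) (g x) \<partial>\<mu>) = ratio_split k (integral\<^sup>L \<mu> f) (integral\<^sup>L \<mu> g)"
  using assms by (cases "k = 1") (simp_all add: ratio_split_def)

section \<open>Differential privacy and refinement of C\<close>

lemma DP_density_decomposition:
  fixes p q :: "'a \<Rightarrow> real"
  assumes int: "integrable \<mu> p" "integrable \<mu> q" and nonneg: "\<And>x. 0 \<le> p x" "\<And>x. 0 \<le> q x"
    and total: "integral\<^sup>L \<mu> p = 1" "integral\<^sup>L \<mu> q = 1"
    and "1 \<le> k" and "\<delta> \<le> 1" and hs: "hockey_stick \<mu> k p q \<le> \<delta>" "hockey_stick \<mu> k q p \<le> \<delta>"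
  obtains u0 u1 u2 u3 :: "'a \<Rightarrow> real"
  where "integrable \<mu> u0" "integrable \<mu> u1" "integrable \<mu> u2" "integrable \<mu> u3"
    "\<And>x. 0 \<le> u0 x \<and> 0 \<le> u1 x \<and> 0 \<le> u2 x \<and> 0 \<le> u3 x"
    "integral\<^sup>L \<mu> u0 = \<delta>" "integral\<^sup>L \<mu> u1 = (1 - \<delta>) / (1 + k)"
    "integral\<^sup>L \<mu> u2 = (1 - \<delta>) / (1 + k)" "integral\<^sup>L \<mu> u3 = \<delta>"
    "\<And>x. p x = u0 x + k * u1 x + u2 x" "\<And>x. q x = u1 x + k * u2 x + u3 x"
proof -
  obtain u0 u3 where int_u: "integrable \<mu> u0" "integrable \<mu> u3"
    and bounds: "\<And>x. 0 \<le> u0 x \<and> u0 x \<le> p x \<and> 0 \<le> u3 x \<and> u3 x \<le> q x \<and>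
          p x - u0 x \<le> k * (q x - u3 x) \<and> q x - u3 x \<le> k * (p x - u0 x)"
    and mass: "integral\<^sup>L \<mu> u0 = \<delta>" "integral\<^sup>L \<mu> u3 = \<delta>"
    using exists_delta_parts[OF int nonneg total \<open>1 \<le> k\<close> \<open>\<delta> \<le> 1\<close> hs] by metis
  define u1 where "u1 x = ratio_split k (p x - u0 x) (q x - u3 x)" for x
  define u2 where "u2 x = ratio_split k (q x - u3 x) (p x - u0 x)" for x
  have int_residual: "integrable \<mu> (\<lambda>x. p x - u0 x)" "integrable \<mu> (\<lambda>x. q x - u3 x)"
    using int int_u by auto
  have "integrable \<mu> u1" "integrable \<mu> u2"
    unfolding u1_def u2_def using int_residual by (simp_all add: integrable_ratio_split)
  moreover have "0 \<le> u1 x" "0 \<le> u2 x" for x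
    using bounds[of x] \<open>1 \<le> k\<close> by (auto simp: u1_def u2_def intro: ratio_split_nonneg)
  moreover have "integral\<^sup>L \<mu> u1 = (1 - \<delta>) / (1 + k)" "integral\<^sup>L \<mu> u2 = (1 - \<delta>) / (1 + k)"
    unfolding u1_def u2_def using int int_u
    by (simp_all add: integral_ratio_split int_residual mass total ratio_split_diagonal[OF \<open>1 \<le> k\<close>])
  moreover have "p x = u0 x + k * u1 x + u2 x" "q x = u1 x + k * u2 x + u3 x" for x
    using ratio_split_solves[of k "p x - u0 x" "q x - u3 x"] ratio_split_solves[of k "q x - u3 x" "p x - u0 x"]
      bounds[of x] \<open>1 \<le> k\<close> by (simp_all add: u1_def u2_def)
  ultimately show ?thesis
    using that[of u0 u1 u2 u3] int_u mass bounds by blast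
qed

lemma C_eps_delta_eq:
  assumes "k = exp \<epsilon>" and "\<beta> = (1 - \<delta>) / (1 + k)"
  shows "C_eps_delta \<epsilon> \<delta> = mat_channel [\<delta>, k * \<beta>, \<beta>, 0] [0, \<beta>, k * \<beta>, \<delta>]"
  using assms by (simp add: C_eps_delta_def ac_simps)

lemma refines_of_density_decomposition:
  fixes M :: "'a channel" and u0 u1 u2 u3 :: "'a \<Rightarrow> real"
  assumes prob_P: "prob_space (fst M)" and sets_\<mu>: "sets \<mu> = sets (fst M)" and "0 \<le> k"
    and int: "integrable \<mu> u0" "integrable \<mu> u1" "integrable \<mu> u2" "integrable \<mu> u3"
    and nonneg: "\<And>x. 0 \<le> u0 x \<and> 0 \<le> u1 x \<and> 0 \<le> u2 x \<and> 0 \<le> u3 x"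
    and P: "fst M = density \<mu> (\<lambda>x. ennreal (u0 x + k * u1 x + u2 x))"
    and Q: "snd M = density \<mu> (\<lambda>x. ennreal (u1 x + k * u2 x + u3 x))"
  shows "mat_channel [integral\<^sup>L \<mu> u0, k * integral\<^sup>L \<mu> u1, integral\<^sup>L \<mu> u2, 0]
           [0, integral\<^sup>L \<mu> u1, k * integral\<^sup>L \<mu> u2, integral\<^sup>L \<mu> u3] \<sqsubseteq>\<^sub>c M"
proof -
  define u where "u i = (if i = 0 then u0 else if i = 1 then u1 else if i = 2 then u2 else u3)" for i :: nat
  have u: "\<And>i. u i \<in> borel_measurable \<mu>" "\<And>i x. 0 \<le> u i x" "\<And>i. integrable \<mu> (u i)"
    using int nonneg by (auto simp: u_def)
  define K where "K i = normalized_density (fst M) \<mu> (u i)" for i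
  note bind_K = bind_fin_row_normalized_density[OF prob_P sets_\<mu>[symmetric] u, folded K_def]
  let ?xs = "[integral\<^sup>L \<mu> u0, k * integral\<^sup>L \<mu> u1, integral\<^sup>L \<mu> u2, 0]"
  let ?ys = "[0, integral\<^sup>L \<mu> u1, k * integral\<^sup>L \<mu> u2, integral\<^sup>L \<mu> u3]"
  have "fin_row ?xs \<bind> K = density \<mu> (\<lambda>x. ennreal (\<Sum>i<length ?xs. [1, k, 1, 0] ! i * u i x))"
    using \<open>0 \<le> k\<close> by (intro bind_K) (auto simp: u_def less_Suc_eq numeral_eq_Suc)
  also have "\<dots> = fst M"
    unfolding P by (simp add: u_def numeral_eq_Suc)
  finally have row_P: "fin_row ?xs \<bind> K = fst M" .
  have "fin_row ?ys \<bind> K = density \<mu> (\<lambda>x. ennreal (\<Sum>i<length ?ys. [0, 1, k, 1] ! i * u i x))"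
    using \<open>0 \<le> k\<close> by (intro bind_K) (auto simp: u_def less_Suc_eq numeral_eq_Suc)
  also have "\<dots> = snd M"
    unfolding Q by (simp add: u_def numeral_eq_Suc)
  finally have row_Q: "fin_row ?ys \<bind> K = snd M" .
  have "K \<in> fin_row ?xs \<rightarrow>\<^sub>M prob_algebra (fst M)"
    using prob_space_normalized_density[OF prob_P u(1-3)] sets_normalized_density[of "fst M" \<mu>] sets_\<mu>
    by (intro measurable_fin_row_prob_algebra) (auto simp: K_def)
  with row_P row_Q show ?thesis
    unfolding refines_def mat_channel_def by auto
qed

lemma DP_imp_refines_C:
  fixes M :: "'a channel"
  assumes M: "is_channel M" and DP: "DP \<epsilon> \<delta> M" and "0 \<le> \<epsilon>" "\<delta> \<le> 1"
  shows "C_eps_delta \<epsilon> \<delta> \<sqsubseteq>\<^sub>c M"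
proof -
  obtain \<mu> p q where sets_\<mu>: "sets \<mu> = sets (fst M)"
    and [measurable]: "p \<in> borel_measurable \<mu>" "q \<in> borel_measurable \<mu>"
    and nonneg: "\<And>x. 0 \<le> p x" "\<And>x. 0 \<le> q x"
    and P: "fst M = density \<mu> (\<lambda>x. ennreal (p x))" and Q: "snd M = density \<mu> (\<lambda>x. ennreal (q x))"
    using channel_densities[OF M] by metis
  have prob_P: "prob_space (fst M)" and "prob_space (snd M)"
    using M by (auto simp: is_channel_def)
  then have int: "integrable \<mu> p" "integrable \<mu> q" and total: "integral\<^sup>L \<mu> p = 1" "integral\<^sup>L \<mu> q = 1"
    using prob_space_density_imp_integral[of p \<mu>] prob_space_density_imp_integral[of q \<mu>] nonneg P Q
    by auto
  define k where "k = exp \<epsilon>"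
  define \<beta> where "\<beta> = (1 - \<delta>) / (1 + k)"
  have "1 \<le> k"
    using \<open>0 \<le> \<epsilon>\<close> by (simp add: k_def)
  have "hockey_stick \<mu> k p q \<le> \<delta>" "hockey_stick \<mu> k q p \<le> \<delta>"
    using DP sets_\<mu> unfolding DP_def k_def
    by (auto intro!: hockey_stick_le_of_measure_le simp: int nonneg P[symmetric] Q[symmetric])
  then obtain u0 u1 u2 u3 where "integrable \<mu> u0" "integrable \<mu> u1" "integrable \<mu> u2" "integrable \<mu> u3"
    and "\<And>x. 0 \<le> u0 x \<and> 0 \<le> u1 x \<and> 0 \<le> u2 x \<and> 0 \<le> u3 x"
    and mass: "integral\<^sup>L \<mu> u0 = \<delta>" "integral\<^sup>L \<mu> u1 = \<beta>" "integral\<^sup>L \<mu> u2 = \<beta>" "integral\<^sup>L \<mu> u3 = \<delta>"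
    and "\<And>x. p x = u0 x + k * u1 x + u2 x" and "\<And>x. q x = u1 x + k * u2 x + u3 x"
    using DP_density_decomposition[OF int nonneg total \<open>1 \<le> k\<close> \<open>\<delta> \<le> 1\<close>] unfolding \<beta>_def by metis
  with P Q have "mat_channel [\<delta>, k * \<beta>, \<beta>, 0] [0, \<beta>, k * \<beta>, \<delta>] \<sqsubseteq>\<^sub>c M"
    using refines_of_density_decomposition[OF prob_P sets_\<mu>, of k u0 u1 u2 u3] \<open>1 \<le> k\<close>
    unfolding mass by simp
  then show ?thesis
    by (simp add: C_eps_delta_eq[OF k_def \<beta>_def])
qed

lemma refines_C_imp_DP:
  assumes refines: "C_eps_delta \<epsilon> \<delta> \<sqsubseteq>\<^sub>c M" and "0 \<le> \<epsilon>" "0 \<le> \<delta>" "\<delta> \<le> 1"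
  shows "DP \<epsilon> \<delta> M"
proof -
  define k where "k = exp \<epsilon>"
  define \<beta> where "\<beta> = (1 - \<delta>) / (1 + k)"
  have "1 \<le> k" "0 \<le> \<beta>"
    using assms by (simp_all add: k_def \<beta>_def)
  then have "\<beta> \<le> k * (k * \<beta>)" "0 \<le> k * \<beta>" "0 \<le> k * \<delta>"
    using \<open>0 \<le> \<delta>\<close> mult_mono[OF \<open>1 \<le> k\<close> \<open>1 \<le> k\<close>] mult_right_mono[of 1 "k * k" \<beta>]
    by (simp_all add: mult.assoc)
  moreover have "mat_channel [\<delta>, k * \<beta>, \<beta>, 0] [0, \<beta>, k * \<beta>, \<delta>] \<sqsubseteq>\<^sub>c M"
    using refines by (simp add: C_eps_delta_eq[OF k_def \<beta>_def])
  ultimately show ?thesis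
    by (intro DP_of_refines_mat_channel[where xs="[\<delta>, k * \<beta>, \<beta>, 0]"])
       (auto simp: less_Suc_eq numeral_eq_Suc \<open>0 \<le> \<delta>\<close> \<open>0 \<le> \<beta>\<close> k_def[symmetric])
qed

section \<open>Tests and the greatest lower bound\<close>

lemma integral_mult_test_le:
  assumes N: "prob_space N" and \<phi>: "is_test N \<phi>" and \<psi>: "is_test N \<psi>"
  shows "(\<integral>x. \<phi> x * \<psi> x \<partial>N) \<le> integral\<^sup>L N \<psi>"
proof -
  have "\<phi> x * \<psi> x \<le> \<psi> x" for x
    using \<phi> \<psi> by (auto simp: is_test_def intro: mult_left_le_one_le)
  with integrable_test[OF N is_test_mult[OF \<phi> \<psi>]] integrable_test[OF N \<psi>] show ?thesis
    by (rule integral_mono)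
qed

lemma integral_mult_test_eq_0:
  assumes N: "prob_space N" and \<phi>: "is_test N \<phi>" and \<psi>: "is_test N \<psi>" and "integral\<^sup>L N \<psi> = 0"
  shows "(\<integral>x. \<phi> x * \<psi> x \<partial>N) = 0"
proof -
  have "0 \<le> (\<integral>x. \<phi> x * \<psi> x \<partial>N)"
    using \<phi> \<psi> by (simp add: is_test_def)
  then show ?thesis
    using integral_mult_test_le[OF N \<phi> \<psi>] assms(4) by simp
qed

lemma disjoint_tests:
  assumes P: "prob_space P" and Q: "prob_space Q" and PQ: "sets Q = sets P"
    and w: "is_test P w" "integral\<^sup>L P w = \<delta>" "integral\<^sup>L Q w = 0"
    and v: "is_test P v" "integral\<^sup>L P v = 0" "integral\<^sup>L Q v = \<delta>"
  obtains w0 w3 where "is_test P w0" "is_test P w3" "is_test P (\<lambda>x. 1 - w0 x - w3 x)"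
    "integral\<^sup>L P w0 = \<delta>" "integral\<^sup>L Q w0 = 0" "integral\<^sup>L P w3 = 0" "integral\<^sup>L Q w3 = \<delta>"
    "(\<integral>x. 1 - w0 x - w3 x \<partial>P) = 1 - \<delta>" "(\<integral>x. 1 - w0 x - w3 x \<partial>Q) = 1 - \<delta>"
proof -
  interpret P: prob_space P by fact
  interpret Q: prob_space Q by fact
  define w0 where "w0 = (\<lambda>x. w x * (1 - v x))"
  define w3 where "w3 = (\<lambda>x. v x * (1 - w x))"
  have w_Q: "is_test Q w" and v_Q: "is_test Q v"
    using w(1) v(1) is_test_cong_sets[OF PQ] by auto
  have tests: "is_test P w0" "is_test P w3" "is_test Q w0" "is_test Q w3"
    using w(1) v(1) w_Q v_Q by (simp_all add: w0_def w3_def is_test_mult is_test_complement)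
  have overlap: "(\<integral>x. w x * v x \<partial>P) = 0" "(\<integral>x. w x * v x \<partial>Q) = 0"
    using integral_mult_test_eq_0[OF P w(1) v(1,2)] integral_mult_test_eq_0[OF Q v_Q w_Q w(3)]
    by (simp_all add: mult.commute)
  have "integrable P w" "integrable P v" "integrable P (\<lambda>x. w x * v x)"
    "integrable Q w" "integrable Q v" "integrable Q (\<lambda>x. w x * v x)"
    using w(1) v(1) w_Q v_Q by (simp_all add: integrable_test[OF P] integrable_test[OF Q] is_test_mult)
  then have mass: "integral\<^sup>L P w0 = \<delta>" "integral\<^sup>L Q w0 = 0" "integral\<^sup>L P w3 = 0" "integral\<^sup>L Q w3 = \<delta>"
    using overlap w v by (simp_all add: w0_def w3_def right_diff_distrib mult.commute[of "v _"])
  have "(\<lambda>x. 1 - w0 x - w3 x) \<in> borel_measurable P"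
  proof -
    have [measurable]: "w0 \<in> borel_measurable P" "w3 \<in> borel_measurable P"
      using tests by (simp_all add: is_test_def)
    show ?thesis
      by measurable
  qed
  moreover have "0 \<le> 1 - w0 x - w3 x \<and> 1 - w0 x - w3 x \<le> 1" for x
  proof -
    have "0 \<le> w x" "w x \<le> 1" "0 \<le> v x" "v x \<le> 1"
      using w(1) v(1) by (auto simp: is_test_def)
    then have "0 \<le> w0 x" "0 \<le> w3 x" "0 \<le> (1 - w x) * (1 - v x) + w x * v x"
      by (simp_all add: w0_def w3_def)
    moreover have "1 - w0 x - w3 x = (1 - w x) * (1 - v x) + w x * v x"
      by (simp add: w0_def w3_def algebra_simps)
    ultimately show ?thesis
      by linarith
  qed
  ultimately have "is_test P (\<lambda>x. 1 - w0 x - w3 x)"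
    by (simp add: is_test_def)
  moreover have "(\<integral>x. 1 - w0 x - w3 x \<partial>P) = 1 - \<delta>" "(\<integral>x. 1 - w0 x - w3 x \<partial>Q) = 1 - \<delta>"
    using tests mass by (simp_all add: integrable_test[OF P] integrable_test[OF Q] P.prob_space Q.prob_space)
  ultimately show ?thesis
    using that tests mass by blast
qed

lemma exists_mixing_weights:
  fixes k \<beta> x y :: real
  assumes "1 \<le> k" "0 \<le> \<beta>" "k * \<beta> \<le> x" "0 \<le> y" "y \<le> \<beta>"
  obtains s t where "0 \<le> s" "s \<le> 1" "0 \<le> t" "t \<le> 1"
    "s * x + t * ((1 + k) * \<beta> - x) = k * \<beta>" "s * y + t * ((1 + k) * \<beta> - y) = \<beta>"
proof -
  have "\<beta> \<le> k * \<beta>"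
    using assms(1,2) mult_right_mono[of 1 k \<beta>] by simp
  show ?thesis
  proof (cases "\<beta> = 0 \<or> x = y")
    case True
    then show ?thesis
      using \<open>\<beta> \<le> k * \<beta>\<close> assms that[of 0 0] that[of 1 0] by (smt (verit, best) mult_cancel_right1)
  next
    case False
    then have "0 < \<beta>" "x \<noteq> y"
      using assms(2) by auto
    moreover have "y \<le> x"
      using \<open>\<beta> \<le> k * \<beta>\<close> assms(3,5) by linarith
    ultimately have "0 < \<beta>" "y < x"
      by auto
    define D where "D = (1 + k) * \<beta>"
    \<comment> \<open>Cramer's rule for the linear system in \<open>s\<close> and \<open>t\<close>.\<close>
    define den where "den = D * (x - y)"
    define s where "s = \<beta> * ((k - 1) * D - k * y + x) / den"
    define t where "t = \<beta> * (x - k * y) / den"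
    have "0 < den"
      using \<open>0 < \<beta>\<close> \<open>y < x\<close> assms(1) by (simp add: D_def den_def)
    moreover have "0 \<le> \<beta> * (k * x - y)" "0 \<le> \<beta> * (k * x - (k * k - 1) * \<beta> - y)"
      "0 \<le> \<beta> * (x - k * y)" "0 \<le> \<beta> * ((k - 1) * D - k * y + x)"
    proof -
      have "0 \<le> x"
        using assms(1-3) by (smt (verit) mult_nonneg_nonneg)
      then have "k * (k * \<beta>) \<le> k * x" "k * y \<le> k * \<beta>" "x \<le> k * x"
        using assms mult_right_mono[of 1 k x] by (simp_all add: mult_left_mono)
      moreover have "0 \<le> (k - 1) * D"
        using assms(1,2) by (simp add: D_def)
      moreover have "(k * k - 1) * \<beta> = k * (k * \<beta>) - \<beta>"
        by (simp add: algebra_simps)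
      ultimately have "0 \<le> k * x - y" "0 \<le> k * x - (k * k - 1) * \<beta> - y" "0 \<le> x - k * y"
        "0 \<le> (k - 1) * D - k * y + x"
        using assms \<open>\<beta> \<le> k * \<beta>\<close> by linarith+
      then show "0 \<le> \<beta> * (k * x - y)" "0 \<le> \<beta> * (k * x - (k * k - 1) * \<beta> - y)"
        "0 \<le> \<beta> * (x - k * y)" "0 \<le> \<beta> * ((k - 1) * D - k * y + x)"
        using \<open>0 < \<beta>\<close> by simp_all
    qed
    moreover have "den - \<beta> * (x - k * y) = \<beta> * (k * x - y)"
      "den - \<beta> * ((k - 1) * D - k * y + x) = \<beta> * (k * x - (k * k - 1) * \<beta> - y)"
      by (simp_all add: den_def D_def algebra_simps)
    ultimately have "0 \<le> s" "s \<le> 1" "0 \<le> t" "t \<le> 1"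
      unfolding s_def t_def by (simp_all add: divide_le_eq_1_pos)
    moreover have "s * x + t * (D - x) = k * \<beta>" "s * y + t * (D - y) = \<beta>"
    proof -
      have "\<beta> * ((k - 1) * D - k * y + x) * x + \<beta> * (x - k * y) * (D - x) = k * \<beta> * den"
        "\<beta> * ((k - 1) * D - k * y + x) * y + \<beta> * (x - k * y) * (D - y) = \<beta> * den"
        by (simp_all add: den_def algebra_simps)
      then show "s * x + t * (D - x) = k * \<beta>" "s * y + t * (D - y) = \<beta>"
        using \<open>0 < den\<close> by (simp_all add: s_def t_def add_divide_distrib[symmetric])
    qed
    ultimately show ?thesis
      using that by (simp add: D_def)
  qed
qed

lemma exists_test_on_residual:
  assumes P: "prob_space P" and Q: "prob_space Q" and PQ: "sets Q = sets P"
    and r: "is_test P r" and z: "is_test P z" and "1 \<le> k" "0 \<le> \<beta>"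
    and mass_r: "integral\<^sup>L P r = (1 + k) * \<beta>" "integral\<^sup>L Q r = (1 + k) * \<beta>"
    and x: "k * \<beta> \<le> (\<integral>x. r x * z x \<partial>P)" and y: "(\<integral>x. r x * z x \<partial>Q) \<le> \<beta>"
  obtains \<psi> where "is_test P \<psi>" "(\<integral>x. r x * \<psi> x \<partial>P) = k * \<beta>" "(\<integral>x. r x * \<psi> x \<partial>Q) = \<beta>"
proof -
  have r_Q: "is_test Q r" and z_Q: "is_test Q z"
    using r z is_test_cong_sets[OF PQ] by auto
  have "0 \<le> (\<integral>x. r x * z x \<partial>Q)"
    using r z by (simp add: is_test_def)
  then obtain s t where st: "0 \<le> s" "s \<le> 1" "0 \<le> t" "t \<le> 1"
    "s * (\<integral>x. r x * z x \<partial>P) + t * ((1 + k) * \<beta> - (\<integral>x. r x * z x \<partial>P)) = k * \<beta>"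
    "s * (\<integral>x. r x * z x \<partial>Q) + t * ((1 + k) * \<beta> - (\<integral>x. r x * z x \<partial>Q)) = \<beta>"
    using exists_mixing_weights[OF \<open>1 \<le> k\<close> \<open>0 \<le> \<beta>\<close> x _ y] by blast
  define \<psi> where "\<psi> = (\<lambda>x. s * z x + t * (1 - z x))"
  have "0 \<le> \<psi> x \<and> \<psi> x \<le> 1" for x
  proof -
    have "0 \<le> z x" "z x \<le> 1"
      using z by (auto simp: is_test_def)
    then have "s * z x + t * (1 - z x) \<le> 1 * z x + 1 * (1 - z x)"
      using st by (intro add_mono mult_right_mono) auto
    then show ?thesis
      using st \<open>0 \<le> z x\<close> \<open>z x \<le> 1\<close> by (simp add: \<psi>_def)
  qed
  moreover have "\<psi> \<in> borel_measurable P"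
  proof -
    have [measurable]: "z \<in> borel_measurable P"
      using z by (simp add: is_test_def)
    show ?thesis
      unfolding \<psi>_def by measurable
  qed
  ultimately have "is_test P \<psi>"
    by (simp add: is_test_def)
  moreover have "(\<integral>x. r x * \<psi> x \<partial>N)
      = s * (\<integral>x. r x * z x \<partial>N) + t * (integral\<^sup>L N r - (\<integral>x. r x * z x \<partial>N))"
    if "integrable N r" "integrable N (\<lambda>x. r x * z x)" for N
  proof -
    have "(\<lambda>x. r x * \<psi> x) = (\<lambda>x. s * (r x * z x) + t * (r x - r x * z x))"
      by (auto simp: \<psi>_def algebra_simps)
    then show ?thesis
      using that by simp
  qed
  moreover have "integrable P r" "integrable P (\<lambda>x. r x * z x)"
    "integrable Q r" "integrable Q (\<lambda>x. r x * z x)"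
    using r z r_Q z_Q by (simp_all add: integrable_test[OF P] integrable_test[OF Q] is_test_mult)
  ultimately show ?thesis
    using st mass_r by (intro that[of \<psi>]) auto
qed

lemma refines_C_of_tests:
  assumes D: "is_channel D" and "1 \<le> k" "0 \<le> \<beta>" and \<beta>: "(1 + k) * \<beta> = 1 - \<delta>"
    and w: "is_test (fst D) w" "integral\<^sup>L (fst D) w = \<delta>" "integral\<^sup>L (snd D) w = 0"
    and v: "is_test (fst D) v" "integral\<^sup>L (fst D) v = 0" "integral\<^sup>L (snd D) v = \<delta>"
    and z: "is_test (fst D) z" "integral\<^sup>L (fst D) z = 1 - \<beta>" "integral\<^sup>L (snd D) z = \<beta>"
  shows "D \<sqsubseteq>\<^sub>c mat_channel [\<delta>, k * \<beta>, \<beta>, 0] [0, \<beta>, k * \<beta>, \<delta>]"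
proof -
  define P Q where "P = fst D" and "Q = snd D"
  have P: "prob_space P" and Q: "prob_space Q" and PQ: "sets Q = sets P"
    using D by (auto simp: is_channel_def P_def Q_def)
  interpret P: prob_space P by fact
  note z = z[folded P_def Q_def]
  have test_Q: "is_test Q \<phi>" if "is_test P \<phi>" for \<phi>
    using that is_test_cong_sets[OF PQ] by simp
  obtain w0 w3 where w0: "is_test P w0" "integral\<^sup>L P w0 = \<delta>" "integral\<^sup>L Q w0 = 0"
    and w3: "is_test P w3" "integral\<^sup>L P w3 = 0" "integral\<^sup>L Q w3 = \<delta>"
    and r: "is_test P (\<lambda>x. 1 - w0 x - w3 x)"
    and mass_r: "(\<integral>x. 1 - w0 x - w3 x \<partial>P) = 1 - \<delta>" "(\<integral>x. 1 - w0 x - w3 x \<partial>Q) = 1 - \<delta>"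
    using disjoint_tests[OF P Q PQ w[folded P_def Q_def] v[folded P_def Q_def]] by blast
  note mass_r = mass_r[folded \<beta>]
  define r where "r = (\<lambda>x. 1 - w0 x - w3 x)"
  have int: "integrable N \<phi>" if "N = P \<or> N = Q" "is_test P \<phi>" for N \<phi>
    using that test_Q integrable_test[OF P] integrable_test[OF Q] by auto
  \<comment> \<open>\<open>z\<close> loses at most the mass \<open>\<delta>\<close> of \<open>1 - r\<close> under \<open>P\<close> when restricted to \<open>r\<close>.\<close>
  have "integral\<^sup>L P z - (\<integral>x. r x * z x \<partial>P) = (\<integral>x. z x * (1 - r x) \<partial>P)"
    using integrable_test[OF P z(1)] integrable_test[OF P is_test_mult[OF r[folded r_def] z(1)]]
    by (simp add: right_diff_distrib mult.commute)
  also have "\<dots> \<le> (\<integral>x. 1 - r x \<partial>P)"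
    using integral_mult_test_le[OF P z(1) is_test_complement[OF r[folded r_def]]] .
  also have "\<dots> = \<delta>"
    using \<beta> mass_r integrable_test[OF P r] by (simp add: r_def[symmetric] P.prob_space)
  finally have "k * \<beta> \<le> (\<integral>x. r x * z x \<partial>P)"
    using z \<beta> by (simp add: algebra_simps)
  moreover have "(\<integral>x. r x * z x \<partial>Q) \<le> \<beta>"
    using integral_mult_test_le[OF Q test_Q[OF r[folded r_def]] test_Q[OF z(1)]] z by simp
  ultimately obtain \<psi> where \<psi>: "is_test P \<psi>" "(\<integral>x. r x * \<psi> x \<partial>P) = k * \<beta>" "(\<integral>x. r x * \<psi> x \<partial>Q) = \<beta>"
    using exists_test_on_residual[OF P Q PQ r[folded r_def] z(1) \<open>1 \<le> k\<close> \<open>0 \<le> \<beta>\<close> mass_r[folded r_def]]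
    by blast
  define ws where "ws = [w0, \<lambda>x. r x * \<psi> x, \<lambda>x. r x * (1 - \<psi> x), w3]"
  have "is_test (fst D) w" if "w \<in> set ws" for w
    using that w0(1) w3(1) r \<psi>(1) by (auto simp: ws_def r_def P_def is_test_mult is_test_complement)
  moreover have "(\<Sum>w\<leftarrow>ws. w x) = 1" for x
    by (simp add: ws_def r_def algebra_simps)
  ultimately have "D \<sqsubseteq>\<^sub>c mat_channel (map (integral\<^sup>L P) ws) (map (integral\<^sup>L Q) ws)"
    unfolding P_def Q_def by (rule refines_mat_channel_of_tests[OF D])
  moreover have diff: "integral\<^sup>L N (\<lambda>x. r x * (1 - \<psi> x)) = integral\<^sup>L N r - integral\<^sup>L N (\<lambda>x. r x * \<psi> x)"
    if "N = P \<or> N = Q" for N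
    using that int[OF that r[folded r_def]] int[OF that is_test_mult[OF r[folded r_def] \<psi>(1)]]
    by (simp add: right_diff_distrib)
  ultimately show ?thesis
    using w0 w3 \<psi> mass_r[folded r_def] diff[of P] diff[of Q] by (simp add: ws_def algebra_simps)
qed

section \<open>The channels \<open>f\<^sup>\<alpha>\<close>\<close>

lemma f_eps_delta_eq:
  "f_eps_delta \<epsilon> \<delta> \<alpha> = max 0 (max (1 - \<delta> - exp \<epsilon> * \<alpha>) ((1 - \<delta> - \<alpha>) / exp \<epsilon>))"
  by (simp add: f_eps_delta_def exp_minus divide_inverse mult.commute)

lemma f_eps_delta_bounds:
  fixes k \<delta> \<alpha> F :: real
  assumes "1 \<le> k" "0 \<le> \<delta>" "\<delta> \<le> 1" "0 \<le> \<alpha>" "\<alpha> \<le> 1"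
    and F: "F = max 0 (max (1 - \<delta> - k * \<alpha>) ((1 - \<delta> - \<alpha>) / k))"
  shows "0 \<le> F \<and> F \<le> 1 \<and> 1 - \<alpha> \<le> k * F + \<delta> \<and> \<alpha> \<le> k * (1 - F) + \<delta> \<and>
    F \<le> k * (1 - \<alpha>) + \<delta> \<and> 1 - F \<le> k * \<alpha> + \<delta>"
proof -
  have scaled: "k * ((1 - \<delta> - \<alpha>) / k) = 1 - \<delta> - \<alpha>"
    using \<open>1 \<le> k\<close> by simp
  have "1 - \<delta> - \<alpha> \<le> k * (1 - \<alpha>)"
    using assms(2,5) \<open>1 \<le> k\<close> mult_right_mono[of 1 k "1 - \<alpha>"] by simp
  then have small: "(1 - \<delta> - \<alpha>) / k \<le> 1 - \<alpha>"
    using \<open>1 \<le> k\<close> by (simp add: divide_le_eq mult.commute)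
  have "\<alpha> \<le> k * \<alpha>" "0 \<le> k * \<alpha>" "0 \<le> k * \<delta>"
    using assms(2,4) \<open>1 \<le> k\<close> mult_right_mono[of 1 k \<alpha>] by auto
  moreover have "k * \<alpha> \<le> k * (k * \<alpha>)"
    using \<open>0 \<le> k * \<alpha>\<close> \<open>1 \<le> k\<close> mult_right_mono[of 1 k "k * \<alpha>"] by simp
  ultimately have "\<alpha> \<le> k * (k * \<alpha>)" "0 \<le> k * \<alpha>" "0 \<le> k * \<delta>"
    by auto
  moreover have "1 - \<alpha> \<le> k * F + \<delta>"
  proof -
    have "(1 - \<delta> - \<alpha>) / k \<le> F"
      by (simp add: F)
    then show ?thesis
      using mult_left_mono[of "(1 - \<delta> - \<alpha>) / k" F k] \<open>1 \<le> k\<close> scaled by simp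
  qed
  moreover have "1 - F \<le> k * \<alpha> + \<delta>" "0 \<le> F"
    by (simp_all add: F)
  moreover have "F = 0 \<or> F = 1 - \<delta> - k * \<alpha> \<or> F = (1 - \<delta> - \<alpha>) / k"
    unfolding F by (auto simp: max_def)
  then consider "F = 0" | "F = 1 - \<delta> - k * \<alpha>" | "F = (1 - \<delta> - \<alpha>) / k" "k * F = 1 - \<delta> - \<alpha>"
    using scaled by auto
  then have "F \<le> 1 \<and> \<alpha> \<le> k * (1 - F) + \<delta> \<and> F \<le> k * (1 - \<alpha>) + \<delta>"
  proof cases
    case 2
    have "k * (1 - F) = k * \<delta> + k * (k * \<alpha>)" "k * (1 - \<alpha>) = k - k * \<alpha>"
      unfolding 2 by (simp_all add: algebra_simps)
    moreover have "F \<le> 1" "\<alpha> \<le> k * \<delta> + k * (k * \<alpha>) + \<delta>" "F \<le> k - k * \<alpha> + \<delta>"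
      using 2 \<open>1 \<le> k\<close> \<open>0 \<le> \<delta>\<close> \<open>0 \<le> k * \<alpha>\<close> \<open>\<alpha> \<le> k * (k * \<alpha>)\<close> \<open>0 \<le> k * \<delta>\<close>
      by linarith+
    ultimately show ?thesis
      by simp
  next
    case 1
    have "0 \<le> k * (1 - \<alpha>)"
      using \<open>1 \<le> k\<close> assms(5) by simp
    then show ?thesis
      using 1 assms(1-5) \<open>1 \<le> k\<close> by simp
  next
    case 3
    have "1 - \<alpha> \<le> k * (1 - \<alpha>)"
      using mult_right_mono[OF \<open>1 \<le> k\<close>, of "1 - \<alpha>"] assms(5) by simp
    moreover have "k * (1 - F) = k - k * F"
      by (simp add: algebra_simps)
    ultimately show ?thesis
      using 3 small assms(1-5) \<open>1 \<le> k\<close> by auto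
  qed
  ultimately show ?thesis
    by blast
qed

lemma is_channel_f_chan:
  assumes "0 \<le> \<alpha>" "\<alpha> \<le> 1" "0 \<le> f \<alpha>" "f \<alpha> \<le> 1"
  shows "is_channel (f_chan f \<alpha>)"
  using assms
  by (auto simp: is_channel_def f_chan_def mat_channel_def less_Suc_eq intro!: prob_space_fin_row)

lemma DP_f_chan:
  assumes "0 \<le> \<epsilon>" "0 \<le> \<delta>" "\<delta> \<le> 1" "0 \<le> \<alpha>" "\<alpha> \<le> 1"
  shows "DP \<epsilon> \<delta> (f_chan (f_eps_delta \<epsilon> \<delta>) \<alpha>)"
proof -
  define k where "k = exp \<epsilon>"
  define F where "F = f_eps_delta \<epsilon> \<delta> \<alpha>"
  have "1 \<le> k"
    using assms(1) by (simp add: k_def)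
  have F: "0 \<le> F \<and> F \<le> 1 \<and> 1 - \<alpha> \<le> k * F + \<delta> \<and> \<alpha> \<le> k * (1 - F) + \<delta> \<and>
      F \<le> k * (1 - \<alpha>) + \<delta> \<and> 1 - F \<le> k * \<alpha> + \<delta>"
    by (rule f_eps_delta_bounds[OF \<open>1 \<le> k\<close> assms(2-5)]) (simp add: F_def k_def f_eps_delta_eq)
  \<comment> \<open>With two outputs the two excesses cannot both be positive, since their sum is \<open>1 - k \<le> 0\<close>.\<close>
  have excess: "max 0 a + max 0 b \<le> \<delta>" if "a + b \<le> 0" "a \<le> \<delta>" "b \<le> \<delta>" for a b :: real
    using that \<open>0 \<le> \<delta>\<close> by (simp add: max_def)
  show ?thesis
    unfolding f_chan_def F_def[symmetric] k_def[symmetric]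
  proof (rule DP_mat_channel)
    show "(\<Sum>i<length [1 - \<alpha>, \<alpha>]. max 0 ([1 - \<alpha>, \<alpha>] ! i - exp \<epsilon> * [F, 1 - F] ! i)) \<le> \<delta>"
      using excess[of "1 - \<alpha> - k * F" "\<alpha> - k * (1 - F)"] F \<open>1 \<le> k\<close>
      by (simp add: numeral_eq_Suc k_def[symmetric] algebra_simps)
    show "(\<Sum>i<length [1 - \<alpha>, \<alpha>]. max 0 ([F, 1 - F] ! i - exp \<epsilon> * [1 - \<alpha>, \<alpha>] ! i)) \<le> \<delta>"
      using excess[of "F - k * (1 - \<alpha>)" "1 - F - k * \<alpha>"] F \<open>1 \<le> k\<close>
      by (simp add: numeral_eq_Suc k_def[symmetric] algebra_simps)
  qed (use F assms in \<open>auto simp: less_Suc_eq\<close>)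
qed

lemma f_eps_delta_values:
  assumes "0 \<le> \<epsilon>" "\<delta> \<le> 1" "0 \<le> \<beta>" and \<beta>: "(1 + exp \<epsilon>) * \<beta> = 1 - \<delta>"
  shows "f_eps_delta \<epsilon> \<delta> (1 - \<delta>) = 0" "f_eps_delta \<epsilon> \<delta> 0 = 1 - \<delta>" "f_eps_delta \<epsilon> \<delta> \<beta> = \<beta>"
proof -
  define k where "k = exp \<epsilon>"
  have "1 \<le> k"
    using assms(1) by (simp add: k_def)
  have "1 - \<delta> \<le> k * (1 - \<delta>)"
    using mult_right_mono[OF \<open>1 \<le> k\<close>, of "1 - \<delta>"] assms(2) by simp
  moreover have "(1 - \<delta>) / k \<le> 1 - \<delta>"
    using mult_left_mono[OF \<open>1 \<le> k\<close>, of "1 - \<delta>"] \<open>1 \<le> k\<close> assms(2) by (simp add: divide_le_eq)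
  moreover have "1 - \<delta> - k * \<beta> = \<beta>" "(1 - \<delta> - \<beta>) / k = \<beta>"
    using \<beta> \<open>1 \<le> k\<close> by (simp_all add: k_def algebra_simps divide_eq_eq)
  ultimately show "f_eps_delta \<epsilon> \<delta> (1 - \<delta>) = 0" "f_eps_delta \<epsilon> \<delta> 0 = 1 - \<delta>" "f_eps_delta \<epsilon> \<delta> \<beta> = \<beta>"
    using assms(2,3) by (simp_all add: f_eps_delta_eq k_def[symmetric])
qed

lemma refines_C_of_refines_f_chan:
  assumes D: "is_channel D" and refines: "\<forall>\<alpha>\<in>{0..1}. D \<sqsubseteq>\<^sub>c f_chan (f_eps_delta \<epsilon> \<delta>) \<alpha>"
    and "0 \<le> \<epsilon>" "0 \<le> \<delta>" "\<delta> \<le> 1"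
  shows "D \<sqsubseteq>\<^sub>c C_eps_delta \<epsilon> \<delta>"
proof -
  define k where "k = exp \<epsilon>"
  define \<beta> where "\<beta> = (1 - \<delta>) / (1 + k)"
  have "1 \<le> k" "0 < 1 + k"
    using assms(3) by (simp_all add: k_def add_pos_pos)
  then have "0 \<le> \<beta>" and \<beta>: "(1 + k) * \<beta> = 1 - \<delta>"
    using assms(5) by (simp_all add: \<beta>_def)
  have "\<beta> \<le> k * \<beta>"
    using mult_right_mono[OF \<open>1 \<le> k\<close> \<open>0 \<le> \<beta>\<close>] by simp
  moreover have "(1 + k) * \<beta> = \<beta> + k * \<beta>"
    by (simp add: algebra_simps)
  ultimately have "\<beta> \<le> 1"
    using \<beta> \<open>0 \<le> \<beta>\<close> assms(4) by linarith
  have f: "f_eps_delta \<epsilon> \<delta> (1 - \<delta>) = 0" "f_eps_delta \<epsilon> \<delta> 0 = 1 - \<delta>" "f_eps_delta \<epsilon> \<delta> \<beta> = \<beta>"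
    using f_eps_delta_values[OF assms(3,5) \<open>0 \<le> \<beta>\<close>] \<beta> by (simp_all add: k_def)
  have R1: "D \<sqsubseteq>\<^sub>c mat_channel [\<delta>, 1 - \<delta>] [0, 1]"
    and R2: "D \<sqsubseteq>\<^sub>c mat_channel [1, 0] [1 - \<delta>, \<delta>]"
    and R3: "D \<sqsubseteq>\<^sub>c mat_channel [1 - \<beta>, \<beta>] [\<beta>, 1 - \<beta>]"
    using refines[rule_format, of "1 - \<delta>"] refines[rule_format, of 0] refines[rule_format, of \<beta>]
      f assms(4,5) \<open>0 \<le> \<beta>\<close> \<open>\<beta> \<le> 1\<close> by (simp_all add: f_chan_def)
  have "0 \<le> 1 - \<delta>" "0 \<le> 1 - \<beta>"
    using assms(5) \<open>\<beta> \<le> 1\<close> by simp_all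
  obtain w where w: "is_test (fst D) w" "integral\<^sup>L (fst D) w = \<delta>" "integral\<^sup>L (snd D) w = 0"
    using test_of_refines_mat_channel[OF D R1 assms(4) order_refl] by blast
  obtain \<phi> where \<phi>: "is_test (fst D) \<phi>" "integral\<^sup>L (fst D) \<phi> = 1" "integral\<^sup>L (snd D) \<phi> = 1 - \<delta>"
    using test_of_refines_mat_channel[OF D R2 zero_le_one \<open>0 \<le> 1 - \<delta>\<close>] by blast
  obtain z where z: "is_test (fst D) z" "integral\<^sup>L (fst D) z = 1 - \<beta>" "integral\<^sup>L (snd D) z = \<beta>"
    using test_of_refines_mat_channel[OF D R3 \<open>0 \<le> 1 - \<beta>\<close> \<open>0 \<le> \<beta>\<close>] by blast
  have v: "is_test (fst D) (\<lambda>x. 1 - \<phi> x)" "(\<integral>x. 1 - \<phi> x \<partial>fst D) = 0" "(\<integral>x. 1 - \<phi> x \<partial>snd D) = \<delta>"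
  proof -
    interpret P: prob_space "fst D"
      using D by (simp add: is_channel_def)
    interpret Q: prob_space "snd D"
      using D by (simp add: is_channel_def)
    have "integrable (fst D) \<phi>" "integrable (snd D) \<phi>"
      using \<phi>(1) D integrable_test is_test_cong_sets[of "snd D" "fst D"] by (auto simp: is_channel_def)
    then show "is_test (fst D) (\<lambda>x. 1 - \<phi> x)" "(\<integral>x. 1 - \<phi> x \<partial>fst D) = 0"
      "(\<integral>x. 1 - \<phi> x \<partial>snd D) = \<delta>"
      using \<phi> by (simp_all add: is_test_complement P.prob_space Q.prob_space)
  qed
  show ?thesis
    unfolding C_eps_delta_eq[OF k_def \<beta>_def] using refines_C_of_tests[OF D \<open>1 \<le> k\<close> \<open>0 \<le> \<beta>\<close> \<beta> w v z] .
qed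

theorem mainTheorem6:
  fixes \<epsilon> \<delta> :: real
  assumes "\<epsilon> \<ge> 0" and "0 \<le> \<delta>" and "\<delta> \<le> 1"
  shows "(\<forall>\<alpha>\<in>{0..1}. C_eps_delta \<epsilon> \<delta> \<sqsubseteq>\<^sub>c f_chan (f_eps_delta \<epsilon> \<delta>) \<alpha>)
       \<and> (\<forall>D :: 'd channel. is_channel D \<and>
              (\<forall>\<alpha>\<in>{0..1}. D \<sqsubseteq>\<^sub>c f_chan (f_eps_delta \<epsilon> \<delta>) \<alpha>)
            \<longrightarrow> D \<sqsubseteq>\<^sub>c C_eps_delta \<epsilon> \<delta>)
       \<and> (\<forall>M :: 'b channel. is_channel M \<longrightarrow> (DP \<epsilon> \<delta> M \<longleftrightarrow> C_eps_delta \<epsilon> \<delta> \<sqsubseteq>\<^sub>c M))"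
proof (intro conjI ballI allI impI)
  fix \<alpha> :: real
  assume "\<alpha> \<in> {0..1}"
  moreover from this have "0 \<le> f_eps_delta \<epsilon> \<delta> \<alpha> \<and> f_eps_delta \<epsilon> \<delta> \<alpha> \<le> 1"
    using assms f_eps_delta_bounds[OF _ assms(2,3) _ _ f_eps_delta_eq] by simp
  ultimately show "C_eps_delta \<epsilon> \<delta> \<sqsubseteq>\<^sub>c f_chan (f_eps_delta \<epsilon> \<delta>) \<alpha>"
    using assms by (intro DP_imp_refines_C is_channel_f_chan DP_f_chan) auto
next
  fix D :: "'d channel"
  assume "is_channel D \<and> (\<forall>\<alpha>\<in>{0..1}. D \<sqsubseteq>\<^sub>c f_chan (f_eps_delta \<epsilon> \<delta>) \<alpha>)"
  then show "D \<sqsubseteq>\<^sub>c C_eps_delta \<epsilon> \<delta>"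
    using refines_C_of_refines_f_chan assms by blast
next
  fix M :: "'b channel"
  assume "is_channel M"
  then show "DP \<epsilon> \<delta> M \<longleftrightarrow> C_eps_delta \<epsilon> \<delta> \<sqsubseteq>\<^sub>c M"
    using DP_imp_refines_C refines_C_imp_DP assms by blast
qed

end
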